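(* Let $K$ be a countable algebraically closed field, let $k\geq0$ be an integer, let $Q$ be the cyclic quiver with vertices $0,1,\dots,k$ and arrows $a_i:i\to i+1$ for $i<k$ and $a_k:k\to0$, and let $M_{\omega_1}$ be the $KQ$-module defined in the context. Then $\mathsf{UP}$ implies $\mathrm{Ext}^1_{KQ}(M_{\omega_1},KQ)=0$. In particular, under $\mathsf{UP}$ it is not true that every $KQ$-module $M$ with $\mathrm{Ext}^n_{KQ}(M,KQ)=0$ for all $n\ge1$ is projective.
   Context: Paths in a quiver are composable sequences of arrows written left to right, with trivial paths $e_v$; the path algebra $KQ$ has basis all paths, product = concatenation when the target of the first equals the source of the second, else $0$. Modules are right modules; projective means every epimorphism onto it splits. $\omega_1$ is the first uncountable ordinal, $\mathrm{Lim}$ the class of nonzero limit ordinals. Fix a ladder system: for each $\alpha\in\omega_1\cap\mathrm{Lim}$ a set $C_\alpha=\{\zeta^\alpha_n:n\in\omega\}$, strictly increasingly enumerated and cofinal in $\alpha$, such that each $\zeta^\alpha_n$ equals $\delta+n+1$ for some $\delta\in\alpha\cap(\{0\}\cup\mathrm{Lim})$. For $\xi<\omega_1$ let $F^\xi=KQ$ if $\xi\notin\mathrm{Lim}$ and $F^\xi=\bigoplus_{n\in\omega}KQ$ if $\xi\in\mathrm{Lim}$; let $F=\bigoplus_{\xi<\omega_1}F^\xi$ (finite-support functions, coordinatewise operations). For $\gamma\in\omega_1\setminus\mathrm{Lim}$, $e^\gamma_0\in F$ has support $\{\gamma\}$ and value $e_0$ there; for $\alpha\in\mathrm{Lim}$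 and $n\in\omega$, $e^{\alpha,n}_0\in F$ has support $\{\alpha\}$ and value at $\alpha$ the element of $\bigoplus_{m}KQ$ with support $\{n\}$ and value $e_0$. Let $G_\alpha$ be the $KQ$-submodule of $F$ generated by $\{e^{\zeta^\alpha_n}_0-e^{\alpha,n}_0+e^{\alpha,n+1}_0a_0a_1\cdots a_k:n\in\omega\}$, let $I=\sum_{\alpha\in\omega_1\cap\mathrm{Lim}}G_\alpha$, and let $M_{\omega_1}$ be the $KQ$-submodule of $F/I$ generated by $\{e^\gamma_0+I:\gamma\in\omega_1\setminus\mathrm{Lim}\}\cup\{e^{\alpha,n}_0+I:\alpha\in\omega_1\cap\mathrm{Lim},n\in\omega\}$. $\mathsf{UP}$: for any sequence $\langle X_\beta:\beta<\omega_1\rangle$ of countable sets and any ladder system $\langle C_\alpha\rangle$ (each $C_\alpha=\{\zeta^\alpha_n\}$ cofinal in $\alpha$ of order type $\omega$) with functions $d_\alpha$ on $C_\alpha$ satisfying $d_\alpha(\zeta^\alpha_n)\in X_{\zeta^\alpha_n}$, there is a function $f$ on $\omega_1$ such that for each $\alpha$, $f(\zeta^\alpha_n)=d_\alpha(\zeta^\alpha_n)$ for all but finitely many $n$. *)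

theory Defs
  imports "HOL-Algebra.Ring" "HOL-Computational_Algebra.Polynomial" "HOL-Library.Countable_Set"
begin

section \<open>omega_1, modelled as a well-ordered type of order type omega_1\<close>

definition omega1_type :: "'w::wellorder itself \<Rightarrow> bool" where
  "omega1_type _ \<longleftrightarrow> uncountable (UNIV :: 'w set) \<and> (\<forall>x::'w. countable {y. y < x})"

definition is_zero :: "'w::wellorder \<Rightarrow> bool" where
  "is_zero \<delta> \<longleftrightarrow> \<not> (\<exists>\<beta>. \<beta> < \<delta>)"

definition is_lim :: "'w::wellorder \<Rightarrow> bool" where
  "is_lim \<alpha> \<longleftrightarrow> (\<exists>\<beta>. \<beta> < \<alpha>) \<and> (\<forall>\<beta><\<alpha>. \<exists>\<gamma>. \<beta> < \<gamma> \<and> \<gamma> < \<alpha>)"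

definition osucc :: "'w::wellorder \<Rightarrow> 'w" where
  "osucc x = (LEAST y. x < y)"

definition ladder_system :: "('w::wellorder \<Rightarrow> nat \<Rightarrow> 'w) \<Rightarrow> bool" where
  "ladder_system \<zeta> \<longleftrightarrow> (\<forall>\<alpha>. is_lim \<alpha> \<longrightarrow>
      strict_mono (\<zeta> \<alpha>) \<and> (\<forall>n. \<zeta> \<alpha> n < \<alpha>) \<and> (\<forall>\<beta><\<alpha>. \<exists>n. \<beta> \<le> \<zeta> \<alpha> n))"

definition good_ladder :: "('w::wellorder \<Rightarrow> nat \<Rightarrow> 'w) \<Rightarrow> bool" where
  "good_ladder \<zeta> \<longleftrightarrow> ladder_system \<zeta> \<and> (\<forall>\<alpha> n. is_lim \<alpha> \<longrightarrow>
      (\<exists>\<delta><\<alpha>. (is_zero \<delta> \<or> is_lim \<delta>) \<and> \<zeta> \<alpha> n = (osucc ^^ Suc n) \<delta>))"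

text \<open>Uniformization principle UP.  Countable sets are represented as subsets of nat
(every countable set injects into nat, so this is equivalent).\<close>
definition UP :: "'w::wellorder itself \<Rightarrow> bool" where
  "UP _ \<longleftrightarrow> (\<forall>(X::'w \<Rightarrow> nat set) (\<zeta>::'w \<Rightarrow> nat \<Rightarrow> 'w) (d::'w \<Rightarrow> nat \<Rightarrow> nat).
      ladder_system \<zeta> \<and> (\<forall>\<alpha> n. is_lim \<alpha> \<longrightarrow> d \<alpha> n \<in> X (\<zeta> \<alpha> n)) \<longrightarrow>
      (\<exists>f::'w \<Rightarrow> nat. \<forall>\<alpha>. is_lim \<alpha> \<longrightarrow> finite {n. f (\<zeta> \<alpha> n) \<noteq> d \<alpha> n}))"

section \<open>The cyclic quiver with vertices 0..k and its path algebra\<close>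

text \<open>A path is (source vertex, list of arrows); arrow a_i is i, from i to i+1 (mod k+1).
The trivial path e_v is (v, []).\<close>
type_synonym path = "nat \<times> nat list"

definition cyc_tgt :: "nat \<Rightarrow> nat \<Rightarrow> nat" where
  "cyc_tgt k i = (if i < k then Suc i else 0)"

definition is_path :: "nat \<Rightarrow> path \<Rightarrow> bool" where
  "is_path k p \<longleftrightarrow> fst p \<le> k \<and> set (snd p) \<subseteq> {..k} \<and>
     (snd p \<noteq> [] \<longrightarrow> hd (snd p) = fst p) \<and>
     (\<forall>i. Suc i < length (snd p) \<longrightarrow> cyc_tgt k (snd p ! i) = snd p ! Suc i)"

definition ptgt :: "nat \<Rightarrow> path \<Rightarrow> nat" where
  "ptgt k p = (if snd p = [] then fst p else cyc_tgt k (last (snd p)))"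

definition kq_carrier :: "nat \<Rightarrow> (path \<Rightarrow> 'k::field) set" where
  "kq_carrier k = {x. finite {p. x p \<noteq> 0} \<and> (\<forall>p. x p \<noteq> 0 \<longrightarrow> is_path k p)}"

definition kq_add :: "(path \<Rightarrow> 'k::field) \<Rightarrow> (path \<Rightarrow> 'k) \<Rightarrow> (path \<Rightarrow> 'k)" where
  "kq_add x y = (\<lambda>p. x p + y p)"

definition kq_mult :: "nat \<Rightarrow> (path \<Rightarrow> 'k::field) \<Rightarrow> (path \<Rightarrow> 'k) \<Rightarrow> (path \<Rightarrow> 'k)" where
  "kq_mult k x y = (\<lambda>p. \<Sum>(q, r) \<in> {(q, r). x q \<noteq> 0 \<and> y r \<noteq> 0 \<and> ptgt k q = fst r \<and>
                                        p = (fst q, snd q @ snd r)}. x q * y r)"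

definition kq_one :: "nat \<Rightarrow> (path \<Rightarrow> 'k::field)" where
  "kq_one k = (\<lambda>p. if fst p \<le> k \<and> snd p = [] then 1 else 0)"

definition KQ :: "nat \<Rightarrow> (path \<Rightarrow> 'k::field) ring" where
  "KQ k = \<lparr>carrier = kq_carrier k, monoid.mult = kq_mult k, monoid.one = kq_one k,
           ring.zero = (\<lambda>_. 0), ring.add = kq_add\<rparr>"

record ('m, 'r) rmod =
  mcarrier :: "'m set"
  madd :: "'m \<Rightarrow> 'm \<Rightarrow> 'm"
  mzero :: 'm
  msmul :: "'m \<Rightarrow> 'r \<Rightarrow> 'm"

definition right_module :: "('r, 'x) ring_scheme \<Rightarrow> ('m, 'r) rmod \<Rightarrow> bool" where
  "right_module R M \<longleftrightarrow>
     mzero M \<in> mcarrier M \<and>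
     (\<forall>x\<in>mcarrier M. \<forall>y\<in>mcarrier M. madd M x y \<in> mcarrier M) \<and>
     (\<forall>x\<in>mcarrier M. \<forall>y\<in>mcarrier M. \<forall>z\<in>mcarrier M.
        madd M (madd M x y) z = madd M x (madd M y z)) \<and>
     (\<forall>x\<in>mcarrier M. \<forall>y\<in>mcarrier M. madd M x y = madd M y x) \<and>
     (\<forall>x\<in>mcarrier M. madd M (mzero M) x = x) \<and>
     (\<forall>x\<in>mcarrier M. \<exists>y\<in>mcarrier M. madd M x y = mzero M) \<and>
     (\<forall>x\<in>mcarrier M. \<forall>r\<in>carrier R. msmul M x r \<in> mcarrier M) \<and>
     (\<forall>x\<in>mcarrier M. \<forall>y\<in>mcarrier M. \<forall>r\<in>carrier R.
        msmul M (madd M x y) r = madd M (msmul M x r) (msmul M y r)) \<and>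
     (\<forall>x\<in>mcarrier M. \<forall>r\<in>carrier R. \<forall>s\<in>carrier R.
        msmul M x (r \<oplus>\<^bsub>R\<^esub> s) = madd M (msmul M x r) (msmul M x s)) \<and>
     (\<forall>x\<in>mcarrier M. \<forall>r\<in>carrier R. \<forall>s\<in>carrier R.
        msmul M x (r \<otimes>\<^bsub>R\<^esub> s) = msmul M (msmul M x r) s) \<and>
     (\<forall>x\<in>mcarrier M. msmul M x \<one>\<^bsub>R\<^esub> = x)"

definition rmod_hom :: "('r, 'x) ring_scheme \<Rightarrow> ('m, 'r) rmod \<Rightarrow> ('n, 'r) rmod \<Rightarrow> ('m \<Rightarrow> 'n) \<Rightarrow> bool" where
  "rmod_hom R M N f \<longleftrightarrow>
     (\<forall>x\<in>mcarrier M. f x \<in> mcarrier N) \<and>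
     (\<forall>x\<in>mcarrier M. \<forall>y\<in>mcarrier M. f (madd M x y) = madd N (f x) (f y)) \<and>
     (\<forall>x\<in>mcarrier M. \<forall>r\<in>carrier R. f (msmul M x r) = msmul N (f x) r)"

text \<open>Ext^1_R(M,N) = 0 (Yoneda): every short exact sequence 0 -> N -> E -> M -> 0 splits.
The middle term E ranges over modules whose elements have type 'e; since 'e is a free
type variable of the theorem, this covers extensions of every size.\<close>
definition ext1_zero :: "'e itself \<Rightarrow> ('r, 'x) ring_scheme \<Rightarrow> ('m, 'r) rmod \<Rightarrow> ('n, 'r) rmod \<Rightarrow> bool" where
  "ext1_zero _ R M N \<longleftrightarrow>
     (\<forall>(E::('e, 'r) rmod) i p.
        right_module R E \<and> rmod_hom R N E i \<and> rmod_hom R E M p \<and>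
        inj_on i (mcarrier N) \<and> p ` mcarrier E = mcarrier M \<and>
        (\<forall>x\<in>mcarrier E. p x = mzero M \<longleftrightarrow> x \<in> i ` mcarrier N)
        \<longrightarrow> (\<exists>s. rmod_hom R M E s \<and> (\<forall>m\<in>mcarrier M. p (s m) = m)))"

definition projective :: "'e itself \<Rightarrow> ('r, 'x) ring_scheme \<Rightarrow> ('m, 'r) rmod \<Rightarrow> bool" where
  "projective _ R M \<longleftrightarrow>
     (\<forall>(E::('e, 'r) rmod) p.
        right_module R E \<and> rmod_hom R E M p \<and> p ` mcarrier E = mcarrier M
        \<longrightarrow> (\<exists>s. rmod_hom R M E s \<and> (\<forall>m\<in>mcarrier M. p (s m) = m)))"

definition is_submodule :: "('r, 'x) ring_scheme \<Rightarrow> ('m, 'r) rmod \<Rightarrow> 'm set \<Rightarrow> bool" where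
  "is_submodule R M N \<longleftrightarrow> N \<subseteq> mcarrier M \<and> mzero M \<in> N \<and>
     (\<forall>x\<in>N. \<forall>y\<in>N. madd M x y \<in> N) \<and> (\<forall>x\<in>N. \<forall>r\<in>carrier R. msmul M x r \<in> N)"

definition gen_submodule :: "('r, 'x) ring_scheme \<Rightarrow> ('m, 'r) rmod \<Rightarrow> 'm set \<Rightarrow> 'm set" where
  "gen_submodule R M S = \<Inter> {N. is_submodule R M N \<and> S \<subseteq> N}"

definition submod :: "('m, 'r) rmod \<Rightarrow> 'm set \<Rightarrow> ('m, 'r) rmod" where
  "submod M N = M\<lparr>mcarrier := N\<rparr>"

definition coset :: "('m, 'r) rmod \<Rightarrow> 'm set \<Rightarrow> 'm \<Rightarrow> 'm set" where
  "coset M N x = {madd M x i | i. i \<in> N}"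

definition quot_mod :: "('m, 'r) rmod \<Rightarrow> 'm set \<Rightarrow> ('m set, 'r) rmod" where
  "quot_mod M N = \<lparr>mcarrier = coset M N ` mcarrier M,
     madd = (\<lambda>A B. coset M N (madd M (SOME a. a \<in> A) (SOME b. b \<in> B))),
     mzero = coset M N (mzero M),
     msmul = (\<lambda>A r. coset M N (msmul M (SOME a. a \<in> A) r))\<rparr>"

definition KQmod :: "nat \<Rightarrow> (path \<Rightarrow> 'k::field, path \<Rightarrow> 'k) rmod" where
  "KQmod k = \<lparr>mcarrier = kq_carrier k, madd = kq_add, mzero = (\<lambda>_. 0), msmul = kq_mult k\<rparr>"

section \<open>The module M_omega1\<close>

text \<open>Elements of F = (+)_{xi<omega1} F^xi: x xi n is the n-th KQ coordinate of the
xi-component; for non-limit xi only coordinate 0 is used (F^xi = KQ).\<close>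
type_synonym ('w, 'k) Fel = "'w \<Rightarrow> nat \<Rightarrow> path \<Rightarrow> 'k"

definition F_carrier :: "nat \<Rightarrow> ('w::wellorder, 'k::field) Fel set" where
  "F_carrier k = {x. finite {(\<xi>, n). x \<xi> n \<noteq> (\<lambda>_. 0)} \<and> (\<forall>\<xi> n. x \<xi> n \<in> kq_carrier k) \<and>
                     (\<forall>\<xi> n. \<not> is_lim \<xi> \<and> n \<noteq> 0 \<longrightarrow> x \<xi> n = (\<lambda>_. 0))}"

definition Fmod :: "nat \<Rightarrow> (('w::wellorder, 'k::field) Fel, path \<Rightarrow> 'k) rmod" where
  "Fmod k = \<lparr>mcarrier = F_carrier k, madd = (\<lambda>x y \<xi> n. kq_add (x \<xi> n) (y \<xi> n)),
             mzero = (\<lambda>_ _ _. 0), msmul = (\<lambda>x r \<xi> n. kq_mult k (x \<xi> n) r)\<rparr>"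

definition Fneg :: "('w, 'k::field) Fel \<Rightarrow> ('w, 'k) Fel" where
  "Fneg x = (\<lambda>\<xi> n p. - x \<xi> n p)"

definition unitv :: "'w \<Rightarrow> nat \<Rightarrow> (path \<Rightarrow> 'k::field) \<Rightarrow> ('w, 'k) Fel" where
  "unitv \<xi> n c = (\<lambda>\<xi>' n'. if \<xi>' = \<xi> \<and> n' = n then c else (\<lambda>_. 0))"

definition kq_e0 :: "path \<Rightarrow> 'k::field" where
  "kq_e0 = (\<lambda>p. if p = (0, []) then 1 else 0)"

definition kq_cycle :: "nat \<Rightarrow> path \<Rightarrow> 'k::field" where
  "kq_cycle k = (\<lambda>p. if p = (0, [0..<Suc k]) then 1 else 0)"

definition e_succ :: "'w \<Rightarrow> ('w, 'k::field) Fel" where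
  "e_succ \<gamma> = unitv \<gamma> 0 kq_e0"

definition e_lim :: "'w \<Rightarrow> nat \<Rightarrow> ('w, 'k::field) Fel" where
  "e_lim \<alpha> n = unitv \<alpha> n kq_e0"

definition ladder_gen :: "nat \<Rightarrow> ('w::wellorder \<Rightarrow> nat \<Rightarrow> 'w) \<Rightarrow> 'w \<Rightarrow> nat \<Rightarrow> ('w, 'k::field) Fel" where
  "ladder_gen k \<zeta> \<alpha> n =
     madd (Fmod k) (madd (Fmod k) (e_succ (\<zeta> \<alpha> n)) (Fneg (e_lim \<alpha> n)))
                   (msmul (Fmod k) (e_lim \<alpha> (Suc n)) (kq_cycle k))"

definition G_sub :: "nat \<Rightarrow> ('w::wellorder \<Rightarrow> nat \<Rightarrow> 'w) \<Rightarrow> 'w \<Rightarrow> ('w, 'k::field) Fel set" where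
  "G_sub k \<zeta> \<alpha> = gen_submodule (KQ k) (Fmod k) (range (ladder_gen k \<zeta> \<alpha>))"

definition I_sub :: "nat \<Rightarrow> ('w::wellorder \<Rightarrow> nat \<Rightarrow> 'w) \<Rightarrow> ('w, 'k::field) Fel set" where
  "I_sub k \<zeta> = gen_submodule (KQ k) (Fmod k) (\<Union>\<alpha>\<in>{\<alpha>. is_lim \<alpha>}. G_sub k \<zeta> \<alpha>)"

definition FI_mod :: "nat \<Rightarrow> ('w::wellorder \<Rightarrow> nat \<Rightarrow> 'w) \<Rightarrow> (('w, 'k::field) Fel set, path \<Rightarrow> 'k) rmod" where
  "FI_mod k \<zeta> = quot_mod (Fmod k) (I_sub k \<zeta>)"

definition M_omega1 :: "nat \<Rightarrow> ('w::wellorder \<Rightarrow> nat \<Rightarrow> 'w) \<Rightarrow> (('w, 'k::field) Fel set, path \<Rightarrow> 'k) rmod" where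
  "M_omega1 k \<zeta> = submod (FI_mod k \<zeta>)
     (gen_submodule (KQ k) (FI_mod k \<zeta>)
        ({coset (Fmod k) (I_sub k \<zeta>) (e_succ \<gamma>) | \<gamma>. \<not> is_lim \<gamma>} \<union>
         {coset (Fmod k) (I_sub k \<zeta>) (e_lim \<alpha> n) | \<alpha> n. is_lim \<alpha>}))"

end

theory Submission
  imports Defs
begin

(* A short exact sequence 0 -> KQ -> E -> M -> 0 splits as soon as the generators of M can be
   lifted to E so that every relation e^{zeta^alpha_n}_0 - e^{alpha,n}_0 + e^{alpha,n+1}_0 c
   (c = a_0 ... a_k the cycle) maps to 0.  Arbitrary lifts leave defects r_{alpha,n} in the
   countable set KQ.  UP yields one function f on the successor ordinals agreeing with
   r_{alpha,n} at zeta^alpha_n for almost all n; correcting the successor lifts by f leaves,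
   for each limit alpha, only finitely many defects s_n, which are absorbed by correcting the
   lifts of e^{alpha,n}_0 by the solution of t_n = s_n + t_{n+1} c.

   M is not projective: a splitting of F0 -> M gives lifts sigma of the generators; choose a
   limit alpha closed under the supports of the lifts of the successor generators.  In the
   alpha-coordinates the relations become sigma_{alpha,n} e_0 = sigma_{alpha,n+1} c, and as c
   lengthens paths this forces sigma_{alpha,0} e_0 = 0 there.  This contradicts the functional
   summing the coefficients of the powers of c over the alpha-coordinates, which vanishes on
   I but takes the value 1 on e^{alpha,0}_0. *)

section \<open>The path algebra of the cyclic quiver\<close>

definition path_cat :: "path \<Rightarrow> path \<Rightarrow> path" where
  "path_cat q r = (fst q, snd q @ snd r)"

lemma path_cat_assoc: "path_cat (path_cat x y) z = path_cat x (path_cat y z)"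
  and fst_path_cat[simp]: "fst (path_cat x y) = fst x"
  by (auto simp: path_cat_def)

lemma ptgt_path_cat: "ptgt k x = fst y \<Longrightarrow> ptgt k (path_cat x y) = ptgt k y"
  by (auto simp: ptgt_def path_cat_def)

lemma is_path_ptgt: "is_path k p \<Longrightarrow> ptgt k p \<le> k"
  by (auto simp: is_path_def ptgt_def cyc_tgt_def)

lemma is_path_path_cat:
  assumes q: "is_path k q" and r: "is_path k r" and c: "ptgt k q = fst r"
  shows "is_path k (path_cat q r)"
proof -
  obtain a L1 b L2 where qq: "q = (a, L1)" and rr: "r = (b, L2)" by fastforce
  have a: "a \<le> k" "set L1 \<subseteq> {..k}" "L1 \<noteq> [] \<Longrightarrow> hd L1 = a"
    "\<And>i. Suc i < length L1 \<Longrightarrow> cyc_tgt k (L1 ! i) = L1 ! Suc i"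
    using q qq by (auto simp: is_path_def)
  have b: "b \<le> k" "set L2 \<subseteq> {..k}" "L2 \<noteq> [] \<Longrightarrow> hd L2 = b"
    "\<And>i. Suc i < length L2 \<Longrightarrow> cyc_tgt k (L2 ! i) = L2 ! Suc i"
    using r rr by (auto simp: is_path_def)
  have cc: "(if L1 = [] then a else cyc_tgt k (last L1)) = b"
    using c by (simp add: qq rr ptgt_def split: if_splits)
  have hd: "L1 @ L2 \<noteq> [] \<Longrightarrow> hd (L1 @ L2) = a"
    using a(3) b(3) cc by (cases "L1 = []") auto
  have step: "cyc_tgt k ((L1 @ L2) ! i) = (L1 @ L2) ! Suc i" if i: "Suc i < length (L1 @ L2)" for i
  proof -
    consider "Suc i < length L1" | "i = length L1 - 1" "L1 \<noteq> []" | "length L1 \<le> i"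
      by (cases "L1 = []") (auto, linarith)
    then show ?thesis
    proof cases
      case 1
      then show ?thesis using a(4)[of i] by (simp add: nth_append)
    next
      case 2
      then have "L2 ! 0 = b" "L1 ! i = last L1"
        using i b(3) by (auto simp: hd_conv_nth last_conv_nth)
      then show ?thesis using 2 cc by (simp add: nth_append)
    next
      case 3
      then have "Suc (i - length L1) < length L2" using i by auto
      from b(4)[OF this] 3 show ?thesis by (simp add: nth_append Suc_diff_le)
    qed
  qed
  show ?thesis using a b hd step qq rr by (simp add: is_path_def path_cat_def)
qed

lemma kq_carrierD:
  "X \<in> kq_carrier k \<Longrightarrow> finite {p. X p \<noteq> 0}"
  "X \<in> kq_carrier k \<Longrightarrow> X p \<noteq> 0 \<Longrightarrow> is_path k p"
  unfolding kq_carrier_def by blast+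

lemma kq_mult_path_cat:
  "kq_mult k X Y p =
     (\<Sum>(q, r) \<in> {(q, r). X q \<noteq> 0 \<and> Y r \<noteq> 0 \<and> ptgt k q = fst r \<and> p = path_cat q r}. X q * Y r)"
  by (simp add: kq_mult_def path_cat_def)

lemma kq_mult_eq_double_sum:
  fixes X Y :: "path \<Rightarrow> 'k::field"
  assumes "finite A" "finite B" "{p. X p \<noteq> 0} \<subseteq> A" "{p. Y p \<noteq> 0} \<subseteq> B"
  shows "kq_mult k X Y p =
    (\<Sum>q\<in>A. \<Sum>r\<in>B. if ptgt k q = fst r \<and> p = path_cat q r then X q * Y r else 0)"
proof -
  have "(\<Sum>q\<in>A. \<Sum>r\<in>B. if ptgt k q = fst r \<and> p = path_cat q r then X q * Y r else 0)
      = (\<Sum>x\<in>{x\<in>A \<times> B. ptgt k (fst x) = fst (snd x) \<and> p = path_cat (fst x) (snd x)}.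
           X (fst x) * Y (snd x))"
    using assms by (simp add: sum.cartesian_product sum.inter_filter split_def)
  also have "\<dots> = (\<Sum>x \<in> {(q, r). X q \<noteq> 0 \<and> Y r \<noteq> 0 \<and> ptgt k q = fst r \<and> p = path_cat q r}.
                    X (fst x) * Y (snd x))"
    by (rule sum.mono_neutral_right) (use assms in auto)
  finally show ?thesis by (simp add: kq_mult_path_cat split_def)
qed

lemma kq_mult_nonzeroD:
  assumes "kq_mult k X Y p \<noteq> 0"
  shows "\<exists>q r. X q \<noteq> 0 \<and> Y r \<noteq> 0 \<and> ptgt k q = fst r \<and> p = path_cat q r"
proof (rule ccontr)
  assume "\<not> ?thesis"
  then have "{(q, r). X q \<noteq> 0 \<and> Y r \<noteq> 0 \<and> ptgt k q = fst r \<and> p = path_cat q r} = {}"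
    by blast
  then have "kq_mult k X Y p = 0" unfolding kq_mult_path_cat by (simp only: sum.empty)
  then show False using assms by simp
qed

lemma kq_mult_support:
  "{p. kq_mult k X Y p \<noteq> 0} \<subseteq> (\<lambda>(q, r). path_cat q r) ` ({p. X p \<noteq> 0} \<times> {p. Y p \<noteq> 0})"
  by (auto dest!: kq_mult_nonzeroD)

lemma kq_mult_zero_left[simp]: "kq_mult k (\<lambda>_. 0) Y = (\<lambda>_. 0)"
  and kq_mult_zero_right[simp]: "kq_mult k X (\<lambda>_. 0) = (\<lambda>_. 0)"
  by (simp_all add: kq_mult_def fun_eq_iff)

lemma kq_mult_neg_left: "kq_mult k (\<lambda>p. - X p) Y = (\<lambda>p. - kq_mult k X Y p)"
  and kq_mult_neg_right: "kq_mult k X (\<lambda>p. - Y p) = (\<lambda>p. - kq_mult k X Y p)"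
  by (simp_all add: kq_mult_def split_def sum_negf fun_eq_iff)

lemma kq_mult_trivial_right:
  assumes "\<forall>r. Y r \<noteq> 0 \<longrightarrow> snd r = []"
  shows "kq_mult k X Y p = X p * Y (ptgt k p, [])"
proof -
  have "{(q, r). X q \<noteq> 0 \<and> Y r \<noteq> 0 \<and> ptgt k q = fst r \<and> p = path_cat q r}
        \<subseteq> {(p, (ptgt k p, []))}"
    using assms by (force simp: path_cat_def)
  then have "kq_mult k X Y p = (\<Sum>(q, r)\<in>{(p, (ptgt k p, []))}. X q * Y r)"
    unfolding kq_mult_path_cat
    by (intro sum.mono_neutral_left) (auto simp: path_cat_def)
  then show ?thesis by simp
qed

lemma kq_mult_trivial_left:
  assumes "\<forall>q. X q \<noteq> 0 \<longrightarrow> snd q = []"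
  shows "kq_mult k X Y p = X (fst p, []) * Y p"
proof -
  have "{(q, r). X q \<noteq> 0 \<and> Y r \<noteq> 0 \<and> ptgt k q = fst r \<and> p = path_cat q r}
        \<subseteq> {((fst p, []), p)}"
    using assms by (force simp: path_cat_def ptgt_def)
  then have "kq_mult k X Y p = (\<Sum>(q, r)\<in>{((fst p, []), p)}. X q * Y r)"
    unfolding kq_mult_path_cat
    by (intro sum.mono_neutral_left) (auto simp: path_cat_def ptgt_def)
  then show ?thesis by simp
qed

lemma kq_mult_closed: "X \<in> kq_carrier k \<Longrightarrow> Y \<in> kq_carrier k \<Longrightarrow> kq_mult k X Y \<in> kq_carrier k"
  unfolding kq_carrier_def
proof safe
  assume "finite {p. X p \<noteq> 0}" "finite {p. Y p \<noteq> 0}"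
  then show "finite {p. kq_mult k X Y p \<noteq> 0}"
    by (rule finite_subset[OF kq_mult_support finite_imageI[OF finite_cartesian_product]])
next
  fix p assume "\<forall>p. X p \<noteq> 0 \<longrightarrow> is_path k p" "\<forall>p. Y p \<noteq> 0 \<longrightarrow> is_path k p"
    and "kq_mult k X Y p \<noteq> 0"
  then show "is_path k p" by (auto dest!: kq_mult_nonzeroD intro: is_path_path_cat)
qed

lemma kq_add_closed: "X \<in> kq_carrier k \<Longrightarrow> Y \<in> kq_carrier k \<Longrightarrow> kq_add X Y \<in> kq_carrier k"
  unfolding kq_carrier_def kq_add_def
proof safe
  assume "finite {p. X p \<noteq> 0}" "finite {p. Y p \<noteq> 0}"
  moreover have "{p. X p + Y p \<noteq> 0} \<subseteq> {p. X p \<noteq> 0} \<union> {p. Y p \<noteq> 0}" by auto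
  ultimately show "finite {p. X p + Y p \<noteq> 0}" by (meson finite_UnI finite_subset)
next
  fix p assume "\<forall>p. X p \<noteq> 0 \<longrightarrow> is_path k p" "\<forall>p. Y p \<noteq> 0 \<longrightarrow> is_path k p" "X p + Y p \<noteq> 0"
  then show "is_path k p" by (metis add.right_neutral add_0)
qed

lemma kq_neg_closed: "X \<in> kq_carrier k \<Longrightarrow> (\<lambda>p. - X p) \<in> kq_carrier k"
  unfolding kq_carrier_def by auto

lemma kq_zero_closed[simp]: "(\<lambda>_. 0) \<in> kq_carrier k"
  unfolding kq_carrier_def by auto

lemma kq_e0_closed[simp]: "kq_e0 \<in> kq_carrier k"
  unfolding kq_carrier_def kq_e0_def by (auto simp: is_path_def)

lemma kq_one_closed[simp]: "(kq_one k :: path \<Rightarrow> 'k::field) \<in> kq_carrier k"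
proof -
  have "{p. kq_one k p \<noteq> (0::'k)} \<subseteq> (\<lambda>v. (v, [])) ` {..k}"
    by (auto simp: kq_one_def image_iff intro!: exI[of _ "fst _"])
  then have "finite {p. kq_one k p \<noteq> (0::'k)}" by (rule finite_subset) auto
  then show ?thesis unfolding kq_carrier_def by (auto simp: kq_one_def is_path_def)
qed

definition cycle_arrows :: "nat \<Rightarrow> nat list" where
  "cycle_arrows k = [0..<Suc k]"

lemma kq_cycle_def': "kq_cycle k = (\<lambda>p. if p = (0, cycle_arrows k) then 1 else 0)"
  by (simp add: kq_cycle_def cycle_arrows_def)

lemma length_cycle_arrows[simp]: "length (cycle_arrows k) = Suc k"
  and last_cycle_arrows[simp]: "last (cycle_arrows k) = k"
  and cycle_arrows_nonempty[simp]: "cycle_arrows k \<noteq> []"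
  by (simp_all add: cycle_arrows_def)

lemma ptgt_path_cat_cycle: "ptgt k (path_cat q (0, cycle_arrows k)) = 0"
  by (simp add: ptgt_def path_cat_def cyc_tgt_def)

lemma kq_cycle_closed[simp]: "kq_cycle k \<in> kq_carrier k"
proof -
  have "is_path k (0, cycle_arrows k)"
    by (auto simp del: upt_Suc simp: is_path_def cycle_arrows_def cyc_tgt_def hd_upt)
  then show ?thesis unfolding kq_carrier_def kq_cycle_def' by auto
qed

lemma kq_mult_add_left:
  assumes "X \<in> kq_carrier k" "Y \<in> kq_carrier k" "Z \<in> kq_carrier k"
  shows "kq_mult k (kq_add X Y) Z = kq_add (kq_mult k X Z) (kq_mult k Y Z)"
proof
  fix p
  let ?A = "{p. X p \<noteq> 0} \<union> {p. Y p \<noteq> 0}" and ?B = "{p. Z p \<noteq> 0}"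
  have f: "finite ?A" "finite ?B" using assms kq_carrierD by auto
  show "kq_mult k (kq_add X Y) Z p = kq_add (kq_mult k X Z) (kq_mult k Y Z) p"
    unfolding kq_add_def
    by (subst (1 2 3) kq_mult_eq_double_sum[OF f])
      (auto simp: kq_add_def sum.distrib[symmetric] distrib_right intro!: sum.cong)
qed

lemma kq_mult_add_right:
  assumes "X \<in> kq_carrier k" "Y \<in> kq_carrier k" "Z \<in> kq_carrier k"
  shows "kq_mult k Z (kq_add X Y) = kq_add (kq_mult k Z X) (kq_mult k Z Y)"
proof
  fix p
  let ?A = "{p. X p \<noteq> 0} \<union> {p. Y p \<noteq> 0}" and ?B = "{p. Z p \<noteq> 0}"
  have f: "finite ?A" "finite ?B" using assms kq_carrierD by auto
  show "kq_mult k Z (kq_add X Y) p = kq_add (kq_mult k Z X) (kq_mult k Z Y) p"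
    unfolding kq_add_def
    by (subst (1 2 3) kq_mult_eq_double_sum[OF f(2) f(1)])
      (auto simp: kq_add_def sum.distrib[symmetric] distrib_left intro!: sum.cong)
qed

lemma kq_mult_mult_left_eq_triple_sum:
  assumes X: "X \<in> kq_carrier k" and Y: "Y \<in> kq_carrier k" and Z: "Z \<in> kq_carrier k"
  defines "A \<equiv> {p. X p \<noteq> 0}" and "B \<equiv> {p. Y p \<noteq> 0}" and "C \<equiv> {p. Z p \<noteq> 0}"
  shows "kq_mult k (kq_mult k X Y) Z p = (\<Sum>x\<in>A. \<Sum>y\<in>B. \<Sum>z\<in>C.
    if ptgt k x = fst y \<and> ptgt k y = fst z \<and> p = path_cat x (path_cat y z) then X x * Y y * Z z else 0)"
proof -
  define AB where "AB = (\<lambda>(q, r). path_cat q r) ` (A \<times> B)"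
  have fin: "finite A" "finite B" "finite C" "finite AB"
    using assms kq_carrierD by (auto simp: AB_def)
  have XY: "kq_mult k X Y u = (\<Sum>x\<in>A. \<Sum>y\<in>B. if ptgt k x = fst y \<and> u = path_cat x y then X x * Y y else 0)" for u
    by (rule kq_mult_eq_double_sum) (use fin in \<open>auto simp: A_def B_def\<close>)
  let ?G = "\<lambda>u z x y. if path_cat x y = u then
      (if ptgt k x = fst y \<and> ptgt k u = fst z \<and> p = path_cat u z then X x * Y y * Z z else 0) else 0"
  have "kq_mult k (kq_mult k X Y) Z p =
      (\<Sum>u\<in>AB. \<Sum>z\<in>C. if ptgt k u = fst z \<and> p = path_cat u z then kq_mult k X Y u * Z z else 0)"
    using kq_mult_support[of k X Y] fin
    by (intro kq_mult_eq_double_sum) (auto simp: AB_def A_def B_def C_def)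
  also have "\<dots> = (\<Sum>u\<in>AB. \<Sum>z\<in>C. \<Sum>x\<in>A. \<Sum>y\<in>B. ?G u z x y)"
    unfolding XY by (intro sum.cong refl) (auto simp: sum_distrib_right intro!: sum.cong sum.neutral)
  also have "\<dots> = (\<Sum>z\<in>C. \<Sum>u\<in>AB. \<Sum>x\<in>A. \<Sum>y\<in>B. ?G u z x y)"
    by (rule sum.swap)
  also have "\<dots> = (\<Sum>z\<in>C. \<Sum>x\<in>A. \<Sum>u\<in>AB. \<Sum>y\<in>B. ?G u z x y)"
    by (rule sum.cong[OF refl], rule sum.swap)
  also have "\<dots> = (\<Sum>z\<in>C. \<Sum>x\<in>A. \<Sum>y\<in>B. \<Sum>u\<in>AB. ?G u z x y)"
    by (rule sum.cong[OF refl], rule sum.cong[OF refl], rule sum.swap)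
  also have "\<dots> = (\<Sum>z\<in>C. \<Sum>x\<in>A. \<Sum>y\<in>B.
      if ptgt k x = fst y \<and> ptgt k y = fst z \<and> p = path_cat x (path_cat y z) then X x * Y y * Z z else 0)"
  proof (intro sum.cong refl)
    fix z x y assume "x \<in> A" "y \<in> B"
    then have "path_cat x y \<in> AB" by (auto simp: AB_def)
    then show "(\<Sum>u\<in>AB. ?G u z x y) = (if ptgt k x = fst y \<and> ptgt k y = fst z \<and>
        p = path_cat x (path_cat y z) then X x * Y y * Z z else 0)"
      using fin by (simp add: sum.delta ptgt_path_cat path_cat_assoc) (auto simp: ptgt_path_cat)
  qed
  also have "\<dots> = (\<Sum>x\<in>A. \<Sum>y\<in>B. \<Sum>z\<in>C.
      if ptgt k x = fst y \<and> ptgt k y = fst z \<and> p = path_cat x (path_cat y z) then X x * Y y * Z z else 0)"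
    by (subst sum.swap) (rule sum.cong[OF refl], rule sum.swap)
  finally show ?thesis .
qed

lemma kq_mult_mult_right_eq_triple_sum:
  assumes X: "X \<in> kq_carrier k" and Y: "Y \<in> kq_carrier k" and Z: "Z \<in> kq_carrier k"
  defines "A \<equiv> {p. X p \<noteq> 0}" and "B \<equiv> {p. Y p \<noteq> 0}" and "C \<equiv> {p. Z p \<noteq> 0}"
  shows "kq_mult k X (kq_mult k Y Z) p = (\<Sum>x\<in>A. \<Sum>y\<in>B. \<Sum>z\<in>C.
    if ptgt k x = fst y \<and> ptgt k y = fst z \<and> p = path_cat x (path_cat y z) then X x * Y y * Z z else 0)"
proof -
  define BC where "BC = (\<lambda>(q, r). path_cat q r) ` (B \<times> C)"
  have fin: "finite A" "finite B" "finite C" "finite BC"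
    using assms kq_carrierD by (auto simp: BC_def)
  have YZ: "kq_mult k Y Z v = (\<Sum>y\<in>B. \<Sum>z\<in>C. if ptgt k y = fst z \<and> v = path_cat y z then Y y * Z z else 0)" for v
    by (rule kq_mult_eq_double_sum) (use fin in \<open>auto simp: C_def B_def\<close>)
  let ?G = "\<lambda>x v y z. if path_cat y z = v then
      (if ptgt k y = fst z \<and> ptgt k x = fst v \<and> p = path_cat x v then X x * (Y y * Z z) else 0) else 0"
  have "kq_mult k X (kq_mult k Y Z) p =
      (\<Sum>x\<in>A. \<Sum>v\<in>BC. if ptgt k x = fst v \<and> p = path_cat x v then X x * kq_mult k Y Z v else 0)"
    using kq_mult_support[of k Y Z] fin
    by (intro kq_mult_eq_double_sum) (auto simp: BC_def A_def B_def C_def)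
  also have "\<dots> = (\<Sum>x\<in>A. \<Sum>v\<in>BC. \<Sum>y\<in>B. \<Sum>z\<in>C. ?G x v y z)"
    unfolding YZ by (intro sum.cong refl) (auto simp: sum_distrib_left intro!: sum.cong sum.neutral)
  also have "\<dots> = (\<Sum>x\<in>A. \<Sum>y\<in>B. \<Sum>v\<in>BC. \<Sum>z\<in>C. ?G x v y z)"
    by (rule sum.cong[OF refl], rule sum.swap)
  also have "\<dots> = (\<Sum>x\<in>A. \<Sum>y\<in>B. \<Sum>z\<in>C. \<Sum>v\<in>BC. ?G x v y z)"
    by (rule sum.cong[OF refl], rule sum.cong[OF refl], rule sum.swap)
  also have "\<dots> = (\<Sum>x\<in>A. \<Sum>y\<in>B. \<Sum>z\<in>C.
      if ptgt k x = fst y \<and> ptgt k y = fst z \<and> p = path_cat x (path_cat y z) then X x * Y y * Z z else 0)"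
  proof (intro sum.cong refl)
    fix x y z assume "y \<in> B" "z \<in> C"
    then have "path_cat y z \<in> BC" by (auto simp: BC_def)
    then show "(\<Sum>v\<in>BC. ?G x v y z) = (if ptgt k x = fst y \<and> ptgt k y = fst z \<and>
        p = path_cat x (path_cat y z) then X x * Y y * Z z else 0)"
      using fin by (simp add: sum.delta mult.assoc)
  qed
  finally show ?thesis .
qed

lemma kq_mult_assoc:
  "X \<in> kq_carrier k \<Longrightarrow> Y \<in> kq_carrier k \<Longrightarrow> Z \<in> kq_carrier k \<Longrightarrow>
    kq_mult k (kq_mult k X Y) Z = kq_mult k X (kq_mult k Y Z)"
  by (simp add: fun_eq_iff kq_mult_mult_left_eq_triple_sum kq_mult_mult_right_eq_triple_sum)

lemma kq_mult_one_right: "X \<in> kq_carrier k \<Longrightarrow> kq_mult k X (kq_one k) = X"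
  by (rule ext, subst kq_mult_trivial_right)
    (auto simp: kq_one_def kq_carrier_def dest: is_path_ptgt)

lemma kq_mult_e0_left: "kq_mult k kq_e0 Y p = (if fst p = 0 then Y p else 0)"
  by (subst kq_mult_trivial_left) (simp_all add: kq_e0_def)

lemma kq_mult_e0_right: "kq_mult k X kq_e0 p = (if ptgt k p = 0 then X p else 0)"
  by (subst kq_mult_trivial_right) (simp_all add: kq_e0_def)

lemma kq_mult_e0_cycle: "kq_mult k kq_e0 (kq_cycle k) = kq_cycle k"
  by (rule ext) (simp add: kq_mult_e0_left kq_cycle_def')

lemma kq_mult_cycle_e0: "kq_mult k (kq_cycle k) kq_e0 = kq_cycle k"
  by (rule ext) (simp add: kq_mult_e0_right kq_cycle_def' ptgt_def cyc_tgt_def)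

lemma kq_mult_e0_e0: "kq_mult k kq_e0 kq_e0 = (kq_e0 :: path \<Rightarrow> 'k::field)"
  by (rule ext) (subst kq_mult_e0_left, simp add: kq_e0_def)

lemma kq_mult_cycle_left_at:
  "kq_mult k (kq_cycle k) Y (0, cycle_arrows k @ L) = Y (0, L)"
proof -
  have "{(q, r). kq_cycle k q \<noteq> 0 \<and> Y r \<noteq> 0 \<and> ptgt k q = fst r \<and> (0, cycle_arrows k @ L) = path_cat q r}
     \<subseteq> {((0, cycle_arrows k), (0, L))}"
    by (auto simp: kq_cycle_def' path_cat_def ptgt_def cyc_tgt_def split: if_splits)
  then have "kq_mult k (kq_cycle k) Y (0, cycle_arrows k @ L) =
      (\<Sum>(q, r)\<in>{((0, cycle_arrows k), (0, L))}. kq_cycle k q * Y r)"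
    unfolding kq_mult_path_cat
    by (intro sum.mono_neutral_left) (auto simp: path_cat_def ptgt_def cyc_tgt_def kq_cycle_def')
  then show ?thesis by (simp add: kq_cycle_def')
qed

lemma kq_mult_cycle_right_nonzeroD:
  "kq_mult k X (kq_cycle k) p \<noteq> 0 \<Longrightarrow> \<exists>q. X q \<noteq> 0 \<and> p = path_cat q (0, cycle_arrows k)"
  by (drule kq_mult_nonzeroD) (fastforce simp: kq_cycle_def' split: if_splits)

section \<open>Right modules\<close>

definition rmod_add_group :: "('m, 'r) rmod \<Rightarrow> 'm monoid" where
  "rmod_add_group M = \<lparr>carrier = mcarrier M, monoid.mult = madd M, one = mzero M\<rparr>"

lemma rmod_add_group_simps[simp]:
  "carrier (rmod_add_group M) = mcarrier M"
  "monoid.mult (rmod_add_group M) = madd M"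
  "one (rmod_add_group M) = mzero M"
  by (simp_all add: rmod_add_group_def)

locale right_mod =
  fixes R :: "('r, 'x) ring_scheme" and M :: "('m, 'r) rmod"
  assumes right_module: "right_module R M"
begin

lemma zero_closed[simp]: "mzero M \<in> mcarrier M"
  using right_module unfolding right_module_def by (elim conjE) blast

lemma add_closed: "x \<in> mcarrier M \<Longrightarrow> y \<in> mcarrier M \<Longrightarrow> madd M x y \<in> mcarrier M"
  using right_module unfolding right_module_def by (elim conjE) blast

lemma add_assoc: "x \<in> mcarrier M \<Longrightarrow> y \<in> mcarrier M \<Longrightarrow> z \<in> mcarrier M \<Longrightarrow>
    madd M (madd M x y) z = madd M x (madd M y z)"
  using right_module unfolding right_module_def by (elim conjE) blast

lemma add_comm: "x \<in> mcarrier M \<Longrightarrow> y \<in> mcarrier M \<Longrightarrow> madd M x y = madd M y x"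
  using right_module unfolding right_module_def by (elim conjE) blast

lemma zero_add: "x \<in> mcarrier M \<Longrightarrow> madd M (mzero M) x = x"
  using right_module unfolding right_module_def by (elim conjE) blast

lemma exists_neg: "x \<in> mcarrier M \<Longrightarrow> \<exists>y\<in>mcarrier M. madd M x y = mzero M"
  using right_module unfolding right_module_def by (elim conjE) blast

lemma smul_closed: "x \<in> mcarrier M \<Longrightarrow> r \<in> carrier R \<Longrightarrow> msmul M x r \<in> mcarrier M"
  using right_module unfolding right_module_def by (elim conjE) blast

lemma smul_add: "x \<in> mcarrier M \<Longrightarrow> y \<in> mcarrier M \<Longrightarrow> r \<in> carrier R \<Longrightarrow>
    msmul M (madd M x y) r = madd M (msmul M x r) (msmul M y r)"
  using right_module unfolding right_module_def by (elim conjE) blast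

lemma add_smul: "x \<in> mcarrier M \<Longrightarrow> r \<in> carrier R \<Longrightarrow> s \<in> carrier R \<Longrightarrow>
    msmul M x (r \<oplus>\<^bsub>R\<^esub> s) = madd M (msmul M x r) (msmul M x s)"
  using right_module unfolding right_module_def by (elim conjE) blast

lemma smul_mult: "x \<in> mcarrier M \<Longrightarrow> r \<in> carrier R \<Longrightarrow> s \<in> carrier R \<Longrightarrow>
    msmul M x (r \<otimes>\<^bsub>R\<^esub> s) = msmul M (msmul M x r) s"
  using right_module unfolding right_module_def by (elim conjE) blast

lemma smul_one: "x \<in> mcarrier M \<Longrightarrow> msmul M x \<one>\<^bsub>R\<^esub> = x"
  using right_module unfolding right_module_def by simp

sublocale add: comm_group "rmod_add_group M"
proof (rule comm_groupI)
  fix x assume "x \<in> carrier (rmod_add_group M)"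
  then obtain y where "y \<in> mcarrier M" "madd M x y = mzero M" using exists_neg by auto
  then show "\<exists>y\<in>carrier (rmod_add_group M). y \<otimes>\<^bsub>rmod_add_group M\<^esub> x = \<one>\<^bsub>rmod_add_group M\<^esub>"
    using add_comm[of x y] \<open>x \<in> _\<close> by auto
qed (auto simp: add_closed add_assoc zero_add intro: add_comm)

lemma add_zero: "x \<in> mcarrier M \<Longrightarrow> madd M x (mzero M) = x"
  using add.r_one by simp

lemma add_left_cancel_zero: "x \<in> mcarrier M \<Longrightarrow> a \<in> mcarrier M \<Longrightarrow> madd M x a = x \<Longrightarrow> a = mzero M"
  using add.l_cancel_one[of x a] by simp

lemma add_interchange3:
  assumes "a \<in> mcarrier M" "b \<in> mcarrier M" "c \<in> mcarrier M" "d \<in> mcarrier M"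
    "e \<in> mcarrier M" "f \<in> mcarrier M"
  shows "madd M (madd M (madd M a b) (madd M c d)) (madd M e f)
    = madd M (madd M (madd M a c) e) (madd M (madd M b d) f)"
proof -
  let ?G = "rmod_add_group M"
  have G: "a \<in> carrier ?G" "b \<in> carrier ?G" "c \<in> carrier ?G" "d \<in> carrier ?G"
    "e \<in> carrier ?G" "f \<in> carrier ?G"
    using assms by simp_all
  have "(a \<otimes>\<^bsub>?G\<^esub> b \<otimes>\<^bsub>?G\<^esub> (c \<otimes>\<^bsub>?G\<^esub> d)) \<otimes>\<^bsub>?G\<^esub> (e \<otimes>\<^bsub>?G\<^esub> f) =
        (a \<otimes>\<^bsub>?G\<^esub> c \<otimes>\<^bsub>?G\<^esub> e) \<otimes>\<^bsub>?G\<^esub> (b \<otimes>\<^bsub>?G\<^esub> d \<otimes>\<^bsub>?G\<^esub> f)"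
    using G by (simp add: add.m_ac del: rmod_add_group_simps)
  then show ?thesis by simp
qed

lemma smul_idem_scalar:
  assumes "x \<in> mcarrier M" "z \<in> carrier R" "z \<oplus>\<^bsub>R\<^esub> z = z"
  shows "msmul M x z = mzero M"
proof -
  have "madd M (msmul M x z) (msmul M x z) = msmul M x z" using add_smul[of x z z] assms by simp
  then show ?thesis using add_left_cancel_zero smul_closed assms(1,2) by blast
qed

lemma zero_smul:
  assumes "r \<in> carrier R" shows "msmul M (mzero M) r = mzero M"
proof -
  have "madd M (msmul M (mzero M) r) (msmul M (mzero M) r) = msmul M (mzero M) r"
    using smul_add[of "mzero M" "mzero M" r] assms by (simp add: zero_add)
  then show ?thesis using add_left_cancel_zero smul_closed zero_closed assms by blast
qed

lemma smul_finprod: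
  assumes "finite S" "f \<in> S \<rightarrow> mcarrier M" "r \<in> carrier R"
  shows "msmul M (finprod (rmod_add_group M) f S) r = finprod (rmod_add_group M) (\<lambda>s. msmul M (f s) r) S"
  using assms
proof (induction S rule: finite_induct)
  case empty
  then show ?case using zero_smul by simp
next
  case (insert a S)
  then have f: "f \<in> S \<rightarrow> carrier (rmod_add_group M)" "f a \<in> carrier (rmod_add_group M)"
    and g: "(\<lambda>s. msmul M (f s) r) \<in> S \<rightarrow> carrier (rmod_add_group M)"
      "msmul M (f a) r \<in> carrier (rmod_add_group M)"
    using smul_closed by auto
  have "msmul M (finprod (rmod_add_group M) f (insert a S)) r
      = madd M (msmul M (f a) r) (msmul M (finprod (rmod_add_group M) f S) r)"
    using add.finprod_insert[OF insert(1,2) f] smul_add add.finprod_closed[OF f(1)] f(2) insert(5)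
    by simp
  also have "\<dots> = finprod (rmod_add_group M) (\<lambda>s. msmul M (f s) r) (insert a S)"
    using insert add.finprod_insert[OF insert(1,2) g] by auto
  finally show ?case .
qed

end

lemma rmod_hom_zero:
  assumes "rmod_hom R M N f" "right_module R N"
    and "mzero M \<in> mcarrier M" "madd M (mzero M) (mzero M) = mzero M"
  shows "f (mzero M) = mzero N"
proof -
  interpret N: right_mod R N by unfold_locales fact
  have "f (mzero M) \<in> mcarrier N" "madd N (f (mzero M)) (f (mzero M)) = f (mzero M)"
    using assms unfolding rmod_hom_def by metis+
  then show ?thesis using N.add_left_cancel_zero by blast
qed

lemma is_submoduleD:
  assumes "is_submodule R M N"
  shows "N \<subseteq> mcarrier M" "mzero M \<in> N" "x \<in> N \<Longrightarrow> y \<in> N \<Longrightarrow> madd M x y \<in> N"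
    "x \<in> N \<Longrightarrow> r \<in> carrier R \<Longrightarrow> msmul M x r \<in> N"
  using assms unfolding is_submodule_def by auto

lemma gen_submodule_least: "is_submodule R M N \<Longrightarrow> S \<subseteq> N \<Longrightarrow> gen_submodule R M S \<subseteq> N"
  unfolding gen_submodule_def by auto

lemma gen_submodule_incl: "S \<subseteq> gen_submodule R M S"
  unfolding gen_submodule_def by auto

lemma is_submodule_gen_submodule:
  assumes "is_submodule R M N" "S \<subseteq> N"
  shows "is_submodule R M (gen_submodule R M S)"
  unfolding is_submodule_def
proof (intro conjI ballI)
  show "gen_submodule R M S \<subseteq> mcarrier M"
    using gen_submodule_least[OF assms] is_submoduleD(1)[OF assms(1)] by auto
qed (auto simp: gen_submodule_def is_submodule_def)

lemma submod_simps[simp]: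
  "mcarrier (submod M N) = N" "madd (submod M N) = madd M"
  "mzero (submod M N) = mzero M" "msmul (submod M N) = msmul M"
  by (simp_all add: submod_def)

lemma right_module_submod:
  assumes M: "right_module R M" and N: "is_submodule R M N"
    and neg: "\<And>x. x \<in> N \<Longrightarrow> \<exists>y\<in>N. madd M x y = mzero M"
  shows "right_module R (submod M N)"
proof -
  interpret right_mod R M by unfold_locales (rule M)
  have "x \<in> N \<Longrightarrow> x \<in> mcarrier M" for x using is_submoduleD(1)[OF N] by blast
  then show ?thesis
    unfolding right_module_def submod_simps
    using is_submoduleD(2-4)[OF N] neg
    by (auto simp: add_assoc zero_add smul_add add_smul smul_mult smul_one intro: add_comm)
qed

section \<open>The free module F and its quotients\<close>

lemma KQ_simps[simp]: "carrier (KQ k) = kq_carrier k" "monoid.mult (KQ k) = kq_mult k"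
  "one (KQ k) = kq_one k" "zero (KQ k) = (\<lambda>_. 0)" "add (KQ k) = kq_add"
  by (simp_all add: KQ_def)

lemma KQmod_simps[simp]: "mcarrier (KQmod k) = kq_carrier k" "madd (KQmod k) = kq_add"
  "mzero (KQmod k) = (\<lambda>_. 0)" "msmul (KQmod k) = kq_mult k"
  by (simp_all add: KQmod_def)

lemma Fmod_simps[simp]: "mcarrier (Fmod k) = F_carrier k"
  "madd (Fmod k) x y = (\<lambda>\<xi> n p. x \<xi> n p + y \<xi> n p)"
  "mzero (Fmod k) = (\<lambda>_ _ _. 0)"
  "msmul (Fmod k) x r = (\<lambda>\<xi> n. kq_mult k (x \<xi> n) r)"
  by (simp_all add: Fmod_def kq_add_def)

lemma F_carrierD:
  assumes "x \<in> F_carrier k"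
  shows "finite {(\<xi>, n). x \<xi> n \<noteq> (\<lambda>_. 0)}" "x \<xi> n \<in> kq_carrier k"
    "\<not> is_lim \<xi> \<Longrightarrow> n \<noteq> 0 \<Longrightarrow> x \<xi> n = (\<lambda>_. 0)"
  using assms unfolding F_carrier_def by auto

lemma F_add_closed:
  assumes "x \<in> F_carrier k" "y \<in> F_carrier k"
  shows "(\<lambda>\<xi> n p. x \<xi> n p + y \<xi> n p) \<in> F_carrier k"
proof -
  have "{(\<xi>, n). (\<lambda>p. x \<xi> n p + y \<xi> n p) \<noteq> (\<lambda>_. 0)}
      \<subseteq> {(\<xi>, n). x \<xi> n \<noteq> (\<lambda>_. 0)} \<union> {(\<xi>, n). y \<xi> n \<noteq> (\<lambda>_. 0)}"
    by auto
  then have "finite {(\<xi>, n). (\<lambda>p. x \<xi> n p + y \<xi> n p) \<noteq> (\<lambda>_. 0)}"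
    using F_carrierD(1)[OF assms(1)] F_carrierD(1)[OF assms(2)] by (meson finite_UnI finite_subset)
  moreover have "(\<lambda>p. x \<xi> n p + y \<xi> n p) \<in> kq_carrier k" for \<xi> n
    using kq_add_closed[OF F_carrierD(2)[OF assms(1)] F_carrierD(2)[OF assms(2)]]
    by (simp add: kq_add_def)
  ultimately show ?thesis using assms unfolding F_carrier_def by auto
qed

lemma F_smul_closed:
  assumes "x \<in> F_carrier k" "r \<in> kq_carrier k"
  shows "(\<lambda>\<xi> n. kq_mult k (x \<xi> n) r) \<in> F_carrier k"
proof -
  have "{(\<xi>, n). kq_mult k (x \<xi> n) r \<noteq> (\<lambda>_. 0)} \<subseteq> {(\<xi>, n). x \<xi> n \<noteq> (\<lambda>_. 0)}"
    by auto
  then have "finite {(\<xi>, n). kq_mult k (x \<xi> n) r \<noteq> (\<lambda>_. 0)}"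
    using F_carrierD(1)[OF assms(1)] by (rule finite_subset)
  then show ?thesis
    using assms kq_mult_closed[OF F_carrierD(2)[OF assms(1)] assms(2)] unfolding F_carrier_def by auto
qed

lemma F_zero_closed[simp]: "(\<lambda>_ _ _. 0) \<in> F_carrier k"
  unfolding F_carrier_def by auto

lemma F_neg_closed: "x \<in> F_carrier k \<Longrightarrow> Fneg x \<in> F_carrier k"
  unfolding F_carrier_def Fneg_def kq_carrier_def by (auto simp: fun_eq_iff)

lemma F_smul_neg_one: "x \<in> F_carrier k \<Longrightarrow> msmul (Fmod k) x (\<lambda>p. - kq_one k p) = Fneg x"
  by (auto simp: Fneg_def kq_mult_neg_right kq_mult_one_right F_carrierD)

lemma right_module_Fmod: "right_module (KQ k) (Fmod k :: (('w::wellorder, 'k::field) Fel, _) rmod)"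
proof -
  have c: "x \<xi> n \<in> kq_carrier k" if "x \<in> F_carrier k" for x :: "('w, 'k) Fel" and \<xi> n
    using F_carrierD(2)[OF that] .
  have smul_add: "kq_mult k (\<lambda>p. x \<xi> n p + y \<xi> n p) r = (\<lambda>p. kq_mult k (x \<xi> n) r p + kq_mult k (y \<xi> n) r p)"
    if "x \<in> F_carrier k" "y \<in> F_carrier k" "r \<in> kq_carrier k" for x y :: "('w, 'k) Fel" and r \<xi> n
    using kq_mult_add_left[OF c c] that unfolding kq_add_def by blast
  have add_smul: "kq_mult k (x \<xi> n) (kq_add r s) = (\<lambda>p. kq_mult k (x \<xi> n) r p + kq_mult k (x \<xi> n) s p)"
    if "x \<in> F_carrier k" "r \<in> kq_carrier k" "s \<in> kq_carrier k" for x :: "('w, 'k) Fel" and r s \<xi> n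
    using kq_mult_add_right[OF _ _ c] that unfolding kq_add_def by blast
  have neg: "\<exists>y\<in>F_carrier k. (\<lambda>\<xi> n p. x \<xi> n p + y \<xi> n p) = (\<lambda>_ _ _. 0)"
    if "x \<in> F_carrier k" for x :: "('w, 'k) Fel"
    using F_neg_closed[OF that] by (intro bexI[of _ "Fneg x"]) (auto simp: Fneg_def)
  show ?thesis
    unfolding right_module_def KQ_simps Fmod_simps
    by (intro conjI ballI)
      (simp_all add: F_add_closed F_smul_closed neg add.assoc add.left_commute smul_add add_smul
        kq_mult_assoc kq_mult_one_right c, simp add: add.commute)
qed

locale F_quotient =
  fixes k :: nat and I :: "('w::wellorder, 'k::field) Fel set"
  assumes I_submodule: "is_submodule (KQ k) (Fmod k) I"
begin

lemma I_F: "I \<subseteq> F_carrier k"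
  and I_zero: "(\<lambda>_ _ _. 0) \<in> I"
  and I_add: "x \<in> I \<Longrightarrow> y \<in> I \<Longrightarrow> (\<lambda>\<xi> n p. x \<xi> n p + y \<xi> n p) \<in> I"
  and I_smul: "x \<in> I \<Longrightarrow> r \<in> kq_carrier k \<Longrightarrow> (\<lambda>\<xi> n. kq_mult k (x \<xi> n) r) \<in> I"
  using is_submoduleD[OF I_submodule] by auto

lemma I_neg:
  assumes "x \<in> I" shows "Fneg x \<in> I"
proof -
  have "x \<in> F_carrier k" using assms I_F by blast
  from F_smul_neg_one[OF this] show ?thesis
    using I_smul[OF assms kq_neg_closed[OF kq_one_closed]] by simp
qed

abbreviation cls :: "('w, 'k) Fel \<Rightarrow> ('w, 'k) Fel set" where
  "cls \<equiv> coset (Fmod k) I"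

abbreviation Q :: "(('w, 'k) Fel set, path \<Rightarrow> 'k) rmod" where
  "Q \<equiv> quot_mod (Fmod k) I"

lemma cls_def': "cls x = {(\<lambda>\<xi> n p. x \<xi> n p + i \<xi> n p) | i. i \<in> I}"
  by (simp add: coset_def)

lemma cls_self: "x \<in> cls x"
  unfolding cls_def' using I_zero by force

lemma cls_memD: "z \<in> cls x \<Longrightarrow> \<exists>i\<in>I. z = (\<lambda>\<xi> n p. x \<xi> n p + i \<xi> n p)"
  unfolding cls_def' by auto

lemma cls_add_I_subset:
  assumes i: "i \<in> I" shows "cls (\<lambda>\<xi> n p. x \<xi> n p + i \<xi> n p) \<subseteq> cls x"
proof (rule subsetI)
  fix z assume "z \<in> cls (\<lambda>\<xi> n p. x \<xi> n p + i \<xi> n p)"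
  from cls_memD[OF this] obtain j where j: "j \<in> I"
    and z: "z = (\<lambda>\<xi> n p. x \<xi> n p + i \<xi> n p + j \<xi> n p)" by auto
  show "z \<in> cls x"
    unfolding cls_def' z
  proof (intro CollectI exI conjI)
    show "(\<lambda>\<xi> n p. i \<xi> n p + j \<xi> n p) \<in> I" by (rule I_add[OF i j])
  qed (simp add: add.assoc)
qed

lemma cls_add_I: assumes "i \<in> I" shows "cls (\<lambda>\<xi> n p. x \<xi> n p + i \<xi> n p) = cls x"
proof
  show "cls x \<subseteq> cls (\<lambda>\<xi> n p. x \<xi> n p + i \<xi> n p)"
    using cls_add_I_subset[OF I_neg[OF assms], of "\<lambda>\<xi> n p. x \<xi> n p + i \<xi> n p"]
    by (simp add: Fneg_def)
qed (rule cls_add_I_subset[OF assms])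

lemma cls_eqD: "cls x = cls y \<Longrightarrow> \<exists>i\<in>I. y = (\<lambda>\<xi> n p. x \<xi> n p + i \<xi> n p)"
  using cls_self[of y] cls_memD by auto

lemma cls_I: "i \<in> I \<Longrightarrow> cls i = cls (\<lambda>_ _ _. 0)"
  using cls_add_I[of i "\<lambda>_ _ _. 0"] by simp

lemma some_cls_rep: "\<exists>i\<in>I. (SOME a. a \<in> cls x) = (\<lambda>\<xi> n p. x \<xi> n p + i \<xi> n p)"
  by (rule cls_memD[OF someI[of "\<lambda>a. a \<in> cls x", OF cls_self]])

lemma Q_add: assumes "x \<in> F_carrier k" "y \<in> F_carrier k"
  shows "madd Q (cls x) (cls y) = cls (\<lambda>\<xi> n p. x \<xi> n p + y \<xi> n p)"
proof -
  obtain i j where i: "i \<in> I" "(SOME a. a \<in> cls x) = (\<lambda>\<xi> n p. x \<xi> n p + i \<xi> n p)"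
    and j: "j \<in> I" "(SOME a. a \<in> cls y) = (\<lambda>\<xi> n p. y \<xi> n p + j \<xi> n p)"
    using some_cls_rep[of x] some_cls_rep[of y] by blast
  have "madd Q (cls x) (cls y) = cls (\<lambda>\<xi> n p. (x \<xi> n p + y \<xi> n p) + (i \<xi> n p + j \<xi> n p))"
    unfolding quot_mod_def using i j by (simp add: algebra_simps)
  also have "\<dots> = cls (\<lambda>\<xi> n p. x \<xi> n p + y \<xi> n p)"
    using cls_add_I[OF I_add[OF i(1) j(1)], of "\<lambda>\<xi> n p. x \<xi> n p + y \<xi> n p"] by simp
  finally show ?thesis .
qed

lemma Q_smul: assumes "x \<in> F_carrier k" "r \<in> kq_carrier k"
  shows "msmul Q (cls x) r = cls (\<lambda>\<xi> n. kq_mult k (x \<xi> n) r)"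
proof -
  obtain i where i: "i \<in> I" "(SOME a. a \<in> cls x) = (\<lambda>\<xi> n p. x \<xi> n p + i \<xi> n p)"
    using some_cls_rep[of x] by blast
  have iF: "i \<in> F_carrier k" using i(1) I_F by blast
  have "(\<lambda>\<xi> n. kq_mult k (\<lambda>p. x \<xi> n p + i \<xi> n p) r)
      = (\<lambda>\<xi> n p. kq_mult k (x \<xi> n) r p + kq_mult k (i \<xi> n) r p)"
    using kq_mult_add_left[OF F_carrierD(2)[OF assms(1)] F_carrierD(2)[OF iF] assms(2)]
    by (simp add: kq_add_def)
  then have "msmul Q (cls x) r = cls (\<lambda>\<xi> n p. kq_mult k (x \<xi> n) r p + kq_mult k (i \<xi> n) r p)"
    unfolding quot_mod_def using i by simp
  also have "\<dots> = cls (\<lambda>\<xi> n. kq_mult k (x \<xi> n) r)"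
    using cls_add_I[OF I_smul[OF i(1) assms(2)], of "\<lambda>\<xi> n. kq_mult k (x \<xi> n) r"] by simp
  finally show ?thesis .
qed

lemma Q_zero: "mzero Q = cls (\<lambda>_ _ _. 0)"
  and Q_carrier: "mcarrier Q = cls ` F_carrier k"
  by (simp_all add: quot_mod_def)

lemma is_submodule_image_cls:
  assumes N: "is_submodule (KQ k) (Fmod k) N"
  shows "is_submodule (KQ k) Q (cls ` N)"
  unfolding is_submodule_def
proof (intro conjI ballI)
  have NF: "x \<in> N \<Longrightarrow> x \<in> F_carrier k" for x using is_submoduleD(1)[OF N] by auto
  show "cls ` N \<subseteq> mcarrier Q" unfolding Q_carrier using NF by auto
  show "mzero Q \<in> cls ` N" unfolding Q_zero using is_submoduleD(2)[OF N] by auto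
  fix A B assume "A \<in> cls ` N" "B \<in> cls ` N"
  then obtain x y where xy: "x \<in> N" "y \<in> N" "A = cls x" "B = cls y" by auto
  then have "madd Q A B = cls (madd (Fmod k) x y)"
    using Q_add[OF NF NF] by simp
  then show "madd Q A B \<in> cls ` N" using is_submoduleD(3)[OF N xy(1,2)] by blast
next
  have NF: "x \<in> N \<Longrightarrow> x \<in> F_carrier k" for x using is_submoduleD(1)[OF N] by auto
  fix A and r :: "path \<Rightarrow> 'k" assume "A \<in> cls ` N" "r \<in> carrier (KQ k)"
  then obtain x where x: "x \<in> N" "A = cls x" and r: "r \<in> kq_carrier k" by auto
  then have "msmul Q A r = cls (msmul (Fmod k) x r)"
    using Q_smul[OF NF r] by simp
  then show "msmul Q A r \<in> cls ` N" using is_submoduleD(4)[OF N x(1)] r by auto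
qed

end

section \<open>The module M as a quotient of F0\<close>

definition starts0 :: "(path \<Rightarrow> 'k::zero) \<Rightarrow> bool" where
  "starts0 c \<longleftrightarrow> (\<forall>p. c p \<noteq> 0 \<longrightarrow> fst p = 0)"

text \<open>\<open>F0 k\<close> is \<open>\<Oplus> e\<^sub>0 KQ\<close>, the submodule of \<open>F\<close> spanned by the generators
  \<open>e\<^sup>\<gamma>\<^sub>0\<close>, \<open>e\<^sup>\<alpha>\<^sup>,\<^sup>n\<^sub>0\<close>; the module \<open>M\<^sub>\<omega>\<^sub>1\<close> turns out to be \<open>F0 k / I\<close>.\<close>
definition F0 :: "nat \<Rightarrow> ('w::wellorder, 'k::field) Fel set" where
  "F0 k = {x \<in> F_carrier k. \<forall>\<xi> n. starts0 (x \<xi> n)}"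

definition F_index :: "'w::wellorder \<Rightarrow> nat \<Rightarrow> bool" where
  "F_index \<xi> n \<longleftrightarrow> is_lim \<xi> \<or> n = 0"

lemma F0_in_F: "x \<in> F0 k \<Longrightarrow> x \<in> F_carrier k"
  by (auto simp: F0_def)

lemma F0_starts0: "x \<in> F0 k \<Longrightarrow> starts0 (x \<xi> n)"
  by (auto simp: F0_def)

lemma starts0_e0: "starts0 kq_e0"
  by (simp add: starts0_def kq_e0_def)

lemma starts0_cycle: "starts0 (kq_cycle k)"
  by (simp add: starts0_def kq_cycle_def')

lemma starts0_neg: "starts0 (c :: path \<Rightarrow> 'k::ab_group_add) \<Longrightarrow> starts0 (\<lambda>p. - c p)"
  by (simp add: starts0_def)

lemma kq_mult_e0_starts0: "starts0 c \<Longrightarrow> kq_mult k kq_e0 c = c"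
  by (auto simp: fun_eq_iff kq_mult_e0_left starts0_def)

lemma F0_is_submodule: "is_submodule (KQ k) (Fmod k) (F0 k :: ('w::wellorder, 'k::field) Fel set)"
  unfolding is_submodule_def
proof (intro conjI ballI)
  fix x y :: "('w, 'k) Fel" assume x: "x \<in> F0 k" and y: "y \<in> F0 k"
  have "starts0 (\<lambda>p. x \<xi> n p + y \<xi> n p)" for \<xi> n
    using F0_starts0[OF x, of \<xi> n] F0_starts0[OF y, of \<xi> n] unfolding starts0_def
    by (metis add.right_neutral add_0)
  then show "madd (Fmod k) x y \<in> F0 k"
    using F_add_closed[OF F0_in_F[OF x] F0_in_F[OF y]] by (simp add: F0_def)
next
  fix x :: "('w, 'k) Fel" and r :: "path \<Rightarrow> 'k" assume x: "x \<in> F0 k" and r: "r \<in> carrier (KQ k)"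
  have "starts0 (kq_mult k (x \<xi> n) r)" for \<xi> n
    using F0_starts0[OF x, of \<xi> n] unfolding starts0_def
    by (metis kq_mult_nonzeroD fst_path_cat)
  then show "msmul (Fmod k) x r \<in> F0 k"
    using F_smul_closed[OF F0_in_F[OF x]] r by (simp add: F0_def)
qed (auto simp: F0_def starts0_def)

lemma right_module_F0:
  "right_module (KQ k) (submod (Fmod k) (F0 k) :: (('w::wellorder, 'k::field) Fel, _) rmod)"
proof (rule right_module_submod[OF right_module_Fmod F0_is_submodule])
  fix x :: "('w, 'k) Fel" assume "x \<in> F0 k"
  then have "Fneg x \<in> F0 k"
    using F_neg_closed[OF F0_in_F] by (auto simp: F0_def Fneg_def starts0_def)
  then show "\<exists>y\<in>F0 k. madd (Fmod k) x y = mzero (Fmod k)"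
    by (intro bexI[of _ "Fneg x"]) (simp_all add: Fneg_def)
qed

lemma unitv_in_F: "c \<in> kq_carrier k \<Longrightarrow> F_index \<xi> n \<Longrightarrow> unitv \<xi> n c \<in> F_carrier k"
proof -
  assume "c \<in> kq_carrier k" "F_index \<xi> n"
  moreover have "finite {(\<xi>', n'). unitv \<xi> n c \<xi>' n' \<noteq> (\<lambda>_. 0)}"
    by (rule finite_subset[of _ "{(\<xi>, n)}"]) (auto simp: unitv_def)
  ultimately show ?thesis unfolding F_carrier_def F_index_def by (auto simp: unitv_def)
qed

lemma unitv_in_F0: "c \<in> kq_carrier k \<Longrightarrow> F_index \<xi> n \<Longrightarrow> starts0 c \<Longrightarrow> unitv \<xi> n c \<in> F0 k"
  using unitv_in_F by (auto simp: F0_def unitv_def starts0_def)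

lemma msmul_unitv: "msmul (Fmod k) (unitv \<xi> n c) r = unitv \<xi> n (kq_mult k c r)"
  by (auto simp: unitv_def fun_eq_iff)

lemma F_index_of_nonzero: "x \<in> F_carrier k \<Longrightarrow> x \<xi> n \<noteq> (\<lambda>_. 0) \<Longrightarrow> F_index \<xi> n"
  using F_carrierD(3) by (auto simp: F_index_def)

lemma F0_clear_coordinate:
  assumes x: "x \<in> F0 k"
  shows "(\<lambda>\<xi>' n'. if \<xi>' = \<xi> \<and> n' = n then (\<lambda>_. 0) else x \<xi>' n') \<in> F0 k"
    (is "?x' \<in> _")
proof -
  have "finite {(\<xi>', n'). ?x' \<xi>' n' \<noteq> (\<lambda>_. 0)}"
    by (rule finite_subset[OF _ F_carrierD(1)[OF F0_in_F[OF x]]]) auto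
  then show ?thesis
    using F_carrierD(2,3)[OF F0_in_F[OF x]] F0_starts0[OF x]
    by (auto simp: F0_def F_carrier_def starts0_def)
qed

lemma F0_induct[consumes 1, case_names zero add_unit]:
  fixes x :: "('w::wellorder, 'k::field) Fel"
  assumes "x \<in> F0 k"
    and zero: "P (\<lambda>_ _ _. 0)"
    and add_unit: "\<And>x \<xi> n c. x \<in> F0 k \<Longrightarrow> P x \<Longrightarrow> c \<in> kq_carrier k \<Longrightarrow> F_index \<xi> n \<Longrightarrow>
      starts0 c \<Longrightarrow> P (\<lambda>\<xi>' n' p. x \<xi>' n' p + unitv \<xi> n c \<xi>' n' p)"
  shows "P x"
proof -
  have "\<forall>x::('w, 'k) Fel\<in>F0 k. {(\<xi>, n). x \<xi> n \<noteq> (\<lambda>_. 0)} \<subseteq> S \<longrightarrow> P x" if "finite S" for S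
    using that
  proof (induction S rule: finite_induct)
    case empty
    have "x = (\<lambda>_ _ _. 0)" if "{(\<xi>, n). x \<xi> n \<noteq> (\<lambda>_. 0)} \<subseteq> {}" for x :: "('w, 'k) Fel"
      using that by (auto simp: fun_eq_iff)
    then show ?case using zero by blast
  next
    case (insert s S)
    obtain \<xi> n where s: "s = (\<xi>, n)" by (cases s)
    show ?case
    proof (intro ballI impI)
      fix x :: "('w, 'k) Fel" assume x: "x \<in> F0 k" and sx: "{(\<xi>, n). x \<xi> n \<noteq> (\<lambda>_. 0)} \<subseteq> insert s S"
      define x' where "x' = (\<lambda>\<xi>' n'. if \<xi>' = \<xi> \<and> n' = n then (\<lambda>_. 0) else x \<xi>' n')"
      have x': "x' \<in> F0 k" unfolding x'_def by (rule F0_clear_coordinate[OF x])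
      moreover have "{(\<xi>', n'). x' \<xi>' n' \<noteq> (\<lambda>_. 0)} \<subseteq> S" using sx s by (auto simp: x'_def)
      ultimately have "P x'" using insert.IH by blast
      show "P x"
      proof (cases "x \<xi> n = (\<lambda>_. 0)")
        case True
        then have "x = x'" by (auto simp: x'_def fun_eq_iff)
        then show ?thesis using \<open>P x'\<close> by simp
      next
        case False
        have "x = (\<lambda>\<xi>' n' p. x' \<xi>' n' p + unitv \<xi> n (x \<xi> n) \<xi>' n' p)"
          by (auto simp: x'_def unitv_def fun_eq_iff)
        then show ?thesis
          using add_unit[OF x' \<open>P x'\<close> F_carrierD(2)[OF F0_in_F[OF x], of \<xi> n]
              F_index_of_nonzero[OF F0_in_F[OF x] False] F0_starts0[OF x]]
          by simp
      qed
    qed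
  qed
  then show ?thesis using assms(1) F_carrierD(1)[OF F0_in_F] by blast
qed

lemma ladder_gen_eq:
  "ladder_gen k \<zeta> \<alpha> n = (\<lambda>\<xi> m p. unitv (\<zeta> \<alpha> n) 0 kq_e0 \<xi> m p + unitv \<alpha> n (\<lambda>p. - kq_e0 p) \<xi> m p
        + unitv \<alpha> (Suc n) (kq_cycle k) \<xi> m p)"
  by (auto simp: ladder_gen_def e_succ_def e_lim_def Fneg_def unitv_def fun_eq_iff kq_mult_e0_cycle)

lemma ladder_gen_in_F0: "is_lim \<alpha> \<Longrightarrow> ladder_gen k \<zeta> \<alpha> n \<in> F0 k"
proof -
  assume a: "is_lim \<alpha>"
  have "unitv (\<zeta> \<alpha> n) 0 kq_e0 \<in> F0 k" "unitv \<alpha> n (\<lambda>p. - kq_e0 p) \<in> F0 k"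
    "unitv \<alpha> (Suc n) (kq_cycle k) \<in> F0 k"
    using a by (auto simp: F_index_def starts0_e0 starts0_cycle starts0_neg
        intro!: unitv_in_F0 kq_neg_closed)
  then show ?thesis
    unfolding ladder_gen_eq using is_submoduleD(3)[OF F0_is_submodule, unfolded Fmod_simps] by blast
qed

locale ladder_quotient =
  fixes k :: nat and \<zeta> :: "'w::wellorder \<Rightarrow> nat \<Rightarrow> 'w" and I :: "('w, 'k::field) Fel set"
  assumes I_def: "I = I_sub k \<zeta>"
begin

lemma G_sub_subset_F0: "is_lim \<alpha> \<Longrightarrow> G_sub k \<zeta> \<alpha> \<subseteq> (F0 k :: ('w, 'k) Fel set)"
  unfolding G_sub_def
  by (rule gen_submodule_least[OF F0_is_submodule]) (auto intro: ladder_gen_in_F0)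

sublocale F_quotient k I
proof
  show "is_submodule (KQ k) (Fmod k) I"
    unfolding I_def I_sub_def
    by (rule is_submodule_gen_submodule[OF F0_is_submodule]) (use G_sub_subset_F0 in blast)
qed

lemma ladder_gen_in_I: "is_lim \<alpha> \<Longrightarrow> ladder_gen k \<zeta> \<alpha> n \<in> I"
  unfolding I_def I_sub_def G_sub_def
  by (rule subsetD[OF gen_submodule_incl], rule UN_I, simp, rule subsetD[OF gen_submodule_incl]) auto

abbreviation M :: "(('w, 'k) Fel set, path \<Rightarrow> 'k) rmod" where
  "M \<equiv> M_omega1 k \<zeta>"

lemma M_ops: "madd M = madd Q" "msmul M = msmul Q" "mzero M = mzero Q"
  by (simp_all add: M_omega1_def submod_def FI_mod_def I_def)

lemma M_carrier_gen:
  "mcarrier M = gen_submodule (KQ k) Q (cls ` {unitv \<xi> n kq_e0 | \<xi> n. F_index \<xi> n})"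
proof -
  have "{cls (e_succ \<gamma>) | \<gamma>. \<not> is_lim \<gamma>} \<union> {cls (e_lim \<alpha> n) | \<alpha> n. is_lim \<alpha>}
      = cls ` {unitv \<xi> n kq_e0 | \<xi> n. F_index \<xi> n}"
    by (auto simp: e_succ_def e_lim_def F_index_def)
  then show ?thesis by (simp add: M_omega1_def submod_def FI_mod_def I_def)
qed

lemma unitv_e0_subset_F0: "{unitv \<xi> n kq_e0 | \<xi> n. F_index \<xi> n} \<subseteq> (F0 k :: ('w, 'k) Fel set)"
proof clarify
  fix \<xi> :: 'w and n assume "F_index \<xi> n"
  then show "unitv \<xi> n kq_e0 \<in> F0 k" by (rule unitv_in_F0[OF kq_e0_closed _ starts0_e0])
qed

lemma M_carrier: "mcarrier M = cls ` F0 k"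
proof
  have gens: "cls ` {unitv \<xi> n kq_e0 | \<xi> n. F_index \<xi> n} \<subseteq> cls ` F0 k"
    by (rule image_mono[OF unitv_e0_subset_F0])
  then show "mcarrier M \<subseteq> cls ` F0 k"
    unfolding M_carrier_gen by (rule gen_submodule_least[OF is_submodule_image_cls[OF F0_is_submodule]])
  have sub: "is_submodule (KQ k) Q (mcarrier M)"
    unfolding M_carrier_gen
    by (rule is_submodule_gen_submodule[OF is_submodule_image_cls[OF F0_is_submodule] gens])
  show "cls ` F0 k \<subseteq> mcarrier M"
  proof (rule image_subsetI)
    fix x :: "('w, 'k) Fel" assume "x \<in> F0 k"
    then show "cls x \<in> mcarrier M"
    proof (induction rule: F0_induct)
      case zero
      then show ?case using is_submoduleD(2)[OF sub] by (simp add: Q_zero)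
    next
      case (add_unit x \<xi> n c)
      have "unitv \<xi> n kq_e0 \<in> {unitv \<xi> n kq_e0 | \<xi> n. F_index \<xi> n}"
        using add_unit.hyps(3) by (intro CollectI exI[of _ \<xi>] exI[of _ n] conjI refl)
      then have "cls (unitv \<xi> n kq_e0) \<in> mcarrier M"
        unfolding M_carrier_gen by (rule subsetD[OF gen_submodule_incl imageI])
      then have "msmul Q (cls (unitv \<xi> n kq_e0)) c \<in> mcarrier M"
        using is_submoduleD(4)[OF sub] add_unit.hyps(2) by simp
      then have "cls (unitv \<xi> n c) \<in> mcarrier M"
        using Q_smul[OF unitv_in_F[OF kq_e0_closed add_unit.hyps(3)] add_unit.hyps(2)]
          msmul_unitv[of k \<xi> n kq_e0 c] kq_mult_e0_starts0[OF add_unit.hyps(4)] by simp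
      then show ?case
        using is_submoduleD(3)[OF sub add_unit.IH]
          Q_add[OF F0_in_F[OF add_unit.hyps(1)] unitv_in_F[OF add_unit.hyps(2,3)], symmetric]
        by simp
    qed
  qed
qed

lemma M_zero: "cls (\<lambda>_ _ _. 0) \<in> mcarrier M"
  unfolding M_carrier using is_submoduleD(2)[OF F0_is_submodule] by auto

lemma cls_unitv_in_M:
  assumes "F_index \<xi> n" shows "cls (unitv \<xi> n kq_e0) \<in> mcarrier M"
  unfolding M_carrier using unitv_in_F0[OF kq_e0_closed assms starts0_e0] by (rule imageI)

end

section \<open>Linear maps out of F\<close>

definition F_support :: "('w, 'k::zero) Fel \<Rightarrow> ('w \<times> nat) set" where
  "F_support x = {(\<xi>, n). x \<xi> n \<noteq> (\<lambda>_. 0)}"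

lemma finite_F_support: "x \<in> F_carrier k \<Longrightarrow> finite (F_support x)"
  unfolding F_support_def by (rule F_carrierD(1))

locale KQ_module = right_mod "KQ k" E
  for k :: nat and E :: "('e, path \<Rightarrow> 'k::field) rmod"
begin

lemmas smul_closed' = smul_closed[unfolded KQ_simps]
  and smul_add' = smul_add[unfolded KQ_simps]
  and add_smul' = add_smul[unfolded KQ_simps]
  and smul_mult' = smul_mult[unfolded KQ_simps]
  and zero_smul' = zero_smul[unfolded KQ_simps]
  and smul_finprod' = smul_finprod[unfolded KQ_simps]

lemma smul_zero_scalar: "x \<in> mcarrier E \<Longrightarrow> msmul E x (\<lambda>_. 0) = mzero E"
  by (rule smul_idem_scalar) (simp_all add: kq_add_def)

definition E_valued :: "('w \<Rightarrow> nat \<Rightarrow> 'e) \<Rightarrow> bool" where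
  "E_valued y \<longleftrightarrow> (\<forall>\<xi> n. y \<xi> n \<in> mcarrier E)"

definition linext :: "('w::wellorder \<Rightarrow> nat \<Rightarrow> 'e) \<Rightarrow> ('w, 'k) Fel \<Rightarrow> 'e" where
  "linext y x = finprod (rmod_add_group E) (\<lambda>(\<xi>, n). msmul E (y \<xi> n) (x \<xi> n)) (F_support x)"

lemma linext_term_closed:
  "E_valued y \<Longrightarrow> x \<in> F_carrier k \<Longrightarrow>
    (\<lambda>(\<xi>, n). msmul E (y \<xi> n) (x \<xi> n)) \<in> S \<rightarrow> carrier (rmod_add_group E)"
  by (auto simp: E_valued_def intro!: smul_closed' F_carrierD(2)[of x k])

lemma linext_eq_finprod:
  assumes y: "E_valued y" and x: "x \<in> F_carrier k" and S: "finite S" "F_support x \<subseteq> S"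
  shows "linext y x = finprod (rmod_add_group E) (\<lambda>(\<xi>, n). msmul E (y \<xi> n) (x \<xi> n)) S"
  unfolding linext_def
proof (rule add.finprod_mono_neutral_cong_left[OF S])
  fix s assume "s \<in> S - F_support x"
  then show "(\<lambda>(\<xi>, n). msmul E (y \<xi> n) (x \<xi> n)) s = \<one>\<^bsub>rmod_add_group E\<^esub>"
    using smul_zero_scalar y by (auto simp: F_support_def E_valued_def)
qed (use linext_term_closed[OF y x] in auto)

lemma linext_closed: "E_valued y \<Longrightarrow> x \<in> F_carrier k \<Longrightarrow> linext y x \<in> mcarrier E"
  unfolding linext_def using add.finprod_closed[OF linext_term_closed] by simp

lemma linext_zero: "linext y (\<lambda>_ _ _. 0) = mzero E"
  by (simp add: linext_def F_support_def)

lemma linext_add: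
  assumes y: "E_valued y" and x: "x \<in> F_carrier k" and x': "x' \<in> F_carrier k"
  shows "linext y (\<lambda>\<xi> n p. x \<xi> n p + x' \<xi> n p) = madd E (linext y x) (linext y x')"
proof -
  let ?S = "F_support x \<union> F_support x'"
  let ?f = "\<lambda>x (\<xi>, n). msmul E (y \<xi> n) (x \<xi> n)"
  have fin: "finite ?S" using finite_F_support x x' by auto
  have "linext y (\<lambda>\<xi> n p. x \<xi> n p + x' \<xi> n p) = finprod (rmod_add_group E) (?f (\<lambda>\<xi> n p. x \<xi> n p + x' \<xi> n p)) ?S"
    by (rule linext_eq_finprod[OF y F_add_closed[OF x x'] fin]) (auto simp: F_support_def)
  also have "\<dots> = finprod (rmod_add_group E) (\<lambda>s. ?f x s \<otimes>\<^bsub>rmod_add_group E\<^esub> ?f x' s) ?S"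
    using add_smul' y F_carrierD(2)[OF x] F_carrierD(2)[OF x']
    by (intro add.finprod_cong') (auto simp: E_valued_def kq_add_def add_closed smul_closed')
  also have "\<dots> = madd E (linext y x) (linext y x')"
    using add.finprod_multf[OF linext_term_closed[OF y x] linext_term_closed[OF y x']]
      linext_eq_finprod[OF y x fin] linext_eq_finprod[OF y x' fin] by simp
  finally show ?thesis .
qed

lemma linext_smul:
  assumes y: "E_valued y" and x: "x \<in> F_carrier k" and r: "r \<in> kq_carrier k"
  shows "linext y (\<lambda>\<xi> n. kq_mult k (x \<xi> n) r) = msmul E (linext y x) r"
proof -
  have fin: "finite (F_support x)" using finite_F_support x by auto
  have "linext y (\<lambda>\<xi> n. kq_mult k (x \<xi> n) r)
      = finprod (rmod_add_group E) (\<lambda>(\<xi>, n). msmul E (y \<xi> n) (kq_mult k (x \<xi> n) r)) (F_support x)"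
    by (rule linext_eq_finprod[OF y F_smul_closed[OF x r] fin]) (auto simp: F_support_def)
  also have "\<dots> = finprod (rmod_add_group E) (\<lambda>s. msmul E ((\<lambda>(\<xi>, n). msmul E (y \<xi> n) (x \<xi> n)) s) r) (F_support x)"
    using smul_mult' y F_carrierD(2)[OF x] r
    by (intro add.finprod_cong') (auto simp: E_valued_def smul_closed')
  also have "\<dots> = msmul E (linext y x) r"
    unfolding linext_def using linext_term_closed[OF y x] by (intro smul_finprod'[symmetric] fin r) auto
  finally show ?thesis .
qed

lemma linext_unitv:
  assumes y: "E_valued y" and c: "c \<in> kq_carrier k" and v: "F_index \<xi> n"
  shows "linext y (unitv \<xi> n c) = msmul E (y \<xi> n) c"
proof -
  have "linext y (unitv \<xi> n c) = finprod (rmod_add_group E) (\<lambda>(\<xi>', n'). msmul E (y \<xi>' n') (unitv \<xi> n c \<xi>' n')) {(\<xi>, n)}"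
    by (rule linext_eq_finprod[OF y unitv_in_F[OF c v]]) (auto simp: F_support_def unitv_def)
  then show ?thesis
    using smul_closed'[OF _ c] y by (simp add: unitv_def E_valued_def add_zero)
qed

end

section \<open>Splitting extensions of M\<close>

locale M_extension = ladder_quotient k \<zeta> I + KQ_module k E
  for k \<zeta> and I :: "('w::wellorder, 'k::field) Fel set" and E :: "('e, path \<Rightarrow> 'k) rmod" +
  fixes i :: "(path \<Rightarrow> 'k) \<Rightarrow> 'e" and p :: "'e \<Rightarrow> ('w, 'k) Fel set"
  assumes i_hom: "rmod_hom (KQ k) (KQmod k) E i" and p_hom: "rmod_hom (KQ k) E M p"
    and i_inj: "inj_on i (kq_carrier k)" and p_surj: "p ` mcarrier E = mcarrier M"
    and p_ker: "\<forall>x\<in>mcarrier E. p x = mzero M \<longleftrightarrow> x \<in> i ` kq_carrier k"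
begin

lemma i_closed: "r \<in> kq_carrier k \<Longrightarrow> i r \<in> mcarrier E"
  and i_add: "r \<in> kq_carrier k \<Longrightarrow> s \<in> kq_carrier k \<Longrightarrow> i (kq_add r s) = madd E (i r) (i s)"
  and i_smul: "r \<in> kq_carrier k \<Longrightarrow> s \<in> kq_carrier k \<Longrightarrow> i (kq_mult k r s) = msmul E (i r) s"
  using i_hom unfolding rmod_hom_def by simp_all

lemma i_zero: "i (\<lambda>_. 0) = mzero E"
  using rmod_hom_zero[OF i_hom right_module] by (simp add: kq_add_def)

lemma p_add: "x \<in> mcarrier E \<Longrightarrow> y \<in> mcarrier E \<Longrightarrow> p (madd E x y) = madd Q (p x) (p y)"
  and p_smul: "x \<in> mcarrier E \<Longrightarrow> r \<in> kq_carrier k \<Longrightarrow> p (msmul E x r) = msmul Q (p x) r"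
  using p_hom unfolding rmod_hom_def M_ops by simp_all

lemma p_i: "r \<in> kq_carrier k \<Longrightarrow> p (i r) = cls (\<lambda>_ _ _. 0)"
  using p_ker i_closed by (simp add: M_ops Q_zero)

definition lifts_gens :: "('w \<Rightarrow> nat \<Rightarrow> 'e) \<Rightarrow> bool" where
  "lifts_gens y \<longleftrightarrow> E_valued y \<and> (\<forall>\<xi> n. F_index \<xi> n \<longrightarrow> p (y \<xi> n) = cls (unitv \<xi> n kq_e0))"

lemma p_linext:
  assumes y: "lifts_gens y" and x: "x \<in> F0 k"
  shows "p (linext y x) = cls x"
  using x
proof (induction rule: F0_induct)
  case zero
  have "p (linext y (\<lambda>_ _ _. 0)) = p (i (\<lambda>_. 0))" by (simp add: linext_zero i_zero)
  then show ?case by (simp add: p_i)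
next
  case (add_unit x \<xi> n c)
  have yE: "E_valued y" and y\<xi>: "y \<xi> n \<in> mcarrier E"
    using y unfolding lifts_gens_def E_valued_def by auto
  note x = F0_in_F[OF add_unit.hyps(1)] and c = add_unit.hyps(2) and v = add_unit.hyps(3)
  have "p (linext y (\<lambda>\<xi>' n' p. x \<xi>' n' p + unitv \<xi> n c \<xi>' n' p))
      = p (madd E (linext y x) (msmul E (y \<xi> n) c))"
    by (simp only: linext_add[OF yE x unitv_in_F[OF c v]] linext_unitv[OF yE c v])
  also have "\<dots> = madd Q (cls x) (msmul Q (cls (unitv \<xi> n kq_e0)) c)"
    using p_add[OF linext_closed[OF yE x] smul_closed'[OF y\<xi> c]] p_smul[OF y\<xi> c] add_unit.IH y v
    by (simp add: lifts_gens_def)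
  also have "msmul Q (cls (unitv \<xi> n kq_e0)) c = cls (unitv \<xi> n c)"
    using Q_smul[OF unitv_in_F[OF kq_e0_closed v] c] msmul_unitv[of k \<xi> n kq_e0 c]
      kq_mult_e0_starts0[OF add_unit.hyps(4)] by simp
  also have "madd Q (cls x) (cls (unitv \<xi> n c)) = cls (\<lambda>\<xi>' n' p. x \<xi>' n' p + unitv \<xi> n c \<xi>' n' p)"
    by (rule Q_add[OF x unitv_in_F[OF c v]])
  finally show ?case .
qed

definition chosen_lift :: "'w \<Rightarrow> nat \<Rightarrow> 'e" where
  "chosen_lift \<xi> n =
    (if F_index \<xi> n then SOME e. e \<in> mcarrier E \<and> p e = cls (unitv \<xi> n kq_e0) else mzero E)"

lemma lifts_chosen_lift: "lifts_gens chosen_lift"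
proof -
  have "\<exists>e. e \<in> mcarrier E \<and> p e = cls (unitv \<xi> n kq_e0)" if "F_index \<xi> n" for \<xi> n
    using cls_unitv_in_M[OF that] unfolding p_surj[symmetric] by auto
  from someI_ex[OF this] show ?thesis
    unfolding lifts_gens_def E_valued_def chosen_lift_def by auto
qed

lemma E_valued_chosen_lift: "E_valued chosen_lift"
  using lifts_chosen_lift unfolding lifts_gens_def by blast

lemma lifts_gens_shift:
  assumes y: "lifts_gens y" and t: "\<And>\<xi> n. t \<xi> n \<in> kq_carrier k"
  shows "lifts_gens (\<lambda>\<xi> n. madd E (y \<xi> n) (i (t \<xi> n)))"
proof -
  have yE: "y \<xi> n \<in> mcarrier E" for \<xi> n using y unfolding lifts_gens_def E_valued_def by blast
  have "p (madd E (y \<xi> n) (i (t \<xi> n))) = cls (unitv \<xi> n kq_e0)" if v: "F_index \<xi> n" for \<xi> n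
  proof -
    have "p (madd E (y \<xi> n) (i (t \<xi> n))) = madd Q (cls (unitv \<xi> n kq_e0)) (cls (\<lambda>_ _ _. 0))"
      using p_add[OF yE i_closed[OF t]] p_i[OF t] y v unfolding lifts_gens_def by simp
    also have "\<dots> = cls (unitv \<xi> n kq_e0)"
      using Q_add[OF unitv_in_F[OF kq_e0_closed v] F_zero_closed] by simp
    finally show ?thesis .
  qed
  then show ?thesis unfolding lifts_gens_def E_valued_def using add_closed[OF yE i_closed[OF t]] by blast
qed

definition kills_relations :: "('w \<Rightarrow> nat \<Rightarrow> 'e) \<Rightarrow> bool" where
  "kills_relations y \<longleftrightarrow>
    lifts_gens y \<and> (\<forall>\<alpha> n. is_lim \<alpha> \<longrightarrow> linext y (ladder_gen k \<zeta> \<alpha> n) = mzero E)"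

lemma linext_I:
  assumes y: "kills_relations y" and x: "x \<in> I"
  shows "linext y x = mzero E"
proof -
  have yE: "E_valued y" using y unfolding kills_relations_def lifts_gens_def by blast
  let ?K = "{x \<in> F_carrier k. linext y x = mzero E}"
  have K: "is_submodule (KQ k) (Fmod k) ?K"
    unfolding is_submodule_def
  proof (intro conjI ballI)
    fix a b assume "a \<in> ?K" "b \<in> ?K"
    then show "madd (Fmod k) a b \<in> ?K"
      using linext_add[OF yE] F_add_closed add_zero[OF zero_closed] by auto
  next
    fix a and r :: "path \<Rightarrow> 'k" assume "a \<in> ?K" "r \<in> carrier (KQ k)"
    then show "msmul (Fmod k) a r \<in> ?K"
      using linext_smul[OF yE] F_smul_closed zero_smul' by auto
  qed (auto simp: linext_zero)
  have "G_sub k \<zeta> \<alpha> \<subseteq> ?K" if "is_lim \<alpha>" for \<alpha>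
    unfolding G_sub_def
    using y that F0_in_F[OF ladder_gen_in_F0[OF that]] unfolding kills_relations_def
    by (intro gen_submodule_least[OF K]) auto
  then have "I \<subseteq> ?K" unfolding I_def I_sub_def by (intro gen_submodule_least[OF K]) blast
  then show ?thesis using x by auto
qed

definition linext_on_M :: "('w \<Rightarrow> nat \<Rightarrow> 'e) \<Rightarrow> ('w, 'k) Fel set \<Rightarrow> 'e" where
  "linext_on_M y m = linext y (SOME x. x \<in> F0 k \<and> cls x = m)"

lemma linext_on_M_cls:
  assumes y: "kills_relations y" and x: "x \<in> F0 k"
  shows "linext_on_M y (cls x) = linext y x"
proof -
  have yE: "E_valued y" using y unfolding kills_relations_def lifts_gens_def by blast
  define x0 where "x0 = (SOME x'. x' \<in> F0 k \<and> cls x' = cls x)"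
  have "x0 \<in> F0 k \<and> cls x0 = cls x" unfolding x0_def by (rule someI[of _ x]) (use x in simp)
  then have x0: "x0 \<in> F0 k" "cls x0 = cls x" by blast+
  then obtain j where j: "j \<in> I" "x = (\<lambda>\<xi> n p. x0 \<xi> n p + j \<xi> n p)" using cls_eqD by blast
  have "linext y x = madd E (linext y x0) (linext y j)"
    unfolding j(2) by (rule linext_add[OF yE F0_in_F[OF x0(1)]]) (use j(1) I_F in blast)
  also have "\<dots> = linext y x0"
    using linext_I[OF y j(1)] add_zero linext_closed[OF yE F0_in_F[OF x0(1)]] by simp
  finally show ?thesis unfolding linext_on_M_def x0_def by simp
qed

lemma splitting_of_kills_relations:
  assumes y: "kills_relations y"
  shows "rmod_hom (KQ k) M E (linext_on_M y) \<and> (\<forall>m\<in>mcarrier M. p (linext_on_M y m) = m)"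
proof -
  have yE: "E_valued y" and ly: "lifts_gens y"
    using y unfolding kills_relations_def lifts_gens_def by blast+
  note F0 = is_submoduleD[OF F0_is_submodule[of k], unfolded Fmod_simps KQ_simps]
  show ?thesis
    unfolding rmod_hom_def M_ops M_carrier
  proof (intro conjI ballI)
    fix m assume "m \<in> cls ` F0 k"
    then obtain x where x: "x \<in> F0 k" "m = cls x" by blast
    then show "linext_on_M y m \<in> mcarrier E" "p (linext_on_M y m) = m"
      using linext_on_M_cls[OF y x(1)] linext_closed[OF yE F0_in_F] p_linext[OF ly] by simp_all
  next
    fix m m' assume "m \<in> cls ` F0 k" "m' \<in> cls ` F0 k"
    then obtain x x' where x: "x \<in> F0 k" "m = cls x" "x' \<in> F0 k" "m' = cls x'" by blast
    have "linext_on_M y (madd Q m m') = linext y (\<lambda>\<xi> n p. x \<xi> n p + x' \<xi> n p)"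
      using Q_add[OF F0_in_F F0_in_F] linext_on_M_cls[OF y F0(3)] x by simp
    then show "linext_on_M y (madd Q m m') = madd E (linext_on_M y m) (linext_on_M y m')"
      using linext_on_M_cls[OF y] linext_add[OF yE F0_in_F F0_in_F] x by simp
  next
    fix m and r :: "path \<Rightarrow> 'k" assume "m \<in> cls ` F0 k" "r \<in> carrier (KQ k)"
    then obtain x where x: "x \<in> F0 k" "m = cls x" and r: "r \<in> kq_carrier k" by auto
    have "linext_on_M y (msmul Q m r) = linext y (\<lambda>\<xi> n. kq_mult k (x \<xi> n) r)"
      using Q_smul[OF F0_in_F r] linext_on_M_cls[OF y F0(4)[OF _ r]] x by simp
    then show "linext_on_M y (msmul Q m r) = msmul E (linext_on_M y m) r"
      using linext_on_M_cls[OF y] linext_smul[OF yE F0_in_F r] x by simp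
  qed
qed

end

section \<open>Vanishing of Ext under UP\<close>

definition ends0 :: "nat \<Rightarrow> (path \<Rightarrow> 'k::zero) \<Rightarrow> bool" where
  "ends0 k X \<longleftrightarrow> (\<forall>p. X p \<noteq> 0 \<longrightarrow> ptgt k p = 0)"

lemma ends0_iff: "ends0 k X \<longleftrightarrow> kq_mult k X kq_e0 = X"
proof
  assume X: "ends0 k X"
  show "kq_mult k X kq_e0 = X"
  proof
    fix p show "kq_mult k X kq_e0 p = X p"
      using X[unfolded ends0_def, rule_format, of p] by (cases "X p = 0") (simp_all add: kq_mult_e0_right)
  qed
next
  assume X: "kq_mult k X kq_e0 = X"
  show "ends0 k X" unfolding ends0_def
  proof (intro allI impI)
    fix p assume "X p \<noteq> 0"
    then have "kq_mult k X kq_e0 p \<noteq> 0" by (simp add: X)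
    then show "ptgt k p = 0" by (simp add: kq_mult_e0_right split: if_splits)
  qed
qed

lemma ends0_add:
  assumes "ends0 k X" "ends0 k Y" shows "ends0 k (kq_add X Y)"
  unfolding ends0_def kq_add_def
proof (intro allI impI)
  fix p assume "X p + Y p \<noteq> 0"
  then have "X p \<noteq> 0 \<or> Y p \<noteq> 0" by auto
  then show "ptgt k p = 0" using assms unfolding ends0_def by blast
qed

lemma ends0_mult_cycle: "ends0 k (kq_mult k X (kq_cycle k))"
  unfolding ends0_def
proof (intro allI impI)
  fix p assume "kq_mult k X (kq_cycle k) p \<noteq> 0"
  then obtain q where "p = path_cat q (0, cycle_arrows k)" using kq_mult_cycle_right_nonzeroD by blast
  then show "ptgt k p = 0" by (simp add: ptgt_path_cat_cycle)
qed

text \<open>\<open>back_solve k s N (N - n) = s n + s (n + 1) c + \<dots> + s (N - 1) c\<^sup>N\<^sup>-\<^sup>1\<^sup>-\<^sup>n\<close>,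
  where \<open>c\<close> is the cycle; it is built from \<open>n = N\<close> downwards.\<close>
primrec back_solve :: "nat \<Rightarrow> (nat \<Rightarrow> path \<Rightarrow> 'k::field) \<Rightarrow> nat \<Rightarrow> nat \<Rightarrow> path \<Rightarrow> 'k" where
  "back_solve k s N 0 = (\<lambda>_. 0)"
| "back_solve k s N (Suc j) = kq_add (s (N - Suc j)) (kq_mult k (back_solve k s N j) (kq_cycle k))"

lemma back_solve_closed: "(\<And>m. s m \<in> kq_carrier k) \<Longrightarrow> back_solve k s N j \<in> kq_carrier k"
  by (induction j) (simp_all add: kq_add_closed kq_mult_closed)

lemma back_solve_ends0: "(\<And>m. ends0 k (s m)) \<Longrightarrow> ends0 k (back_solve k s N j)"
proof (induction j)
  case 0
  then show ?case by (simp add: ends0_def)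
qed (simp add: ends0_add ends0_mult_cycle)

lemma exists_cycle_back_solution:
  fixes s :: "nat \<Rightarrow> path \<Rightarrow> 'k::field"
  assumes "\<And>m. s m \<in> kq_carrier k" "\<And>m. ends0 k (s m)" "\<And>m. N \<le> m \<Longrightarrow> s m = (\<lambda>_. 0)"
  shows "\<exists>t. (\<forall>n. t n \<in> kq_carrier k \<and> ends0 k (t n)) \<and>
    (\<forall>n. t n = kq_add (s n) (kq_mult k (t (Suc n)) (kq_cycle k)))"
proof -
  define t where "t n = back_solve k s N (N - n)" for n
  have "t n \<in> kq_carrier k \<and> ends0 k (t n)" for n
    unfolding t_def using back_solve_closed back_solve_ends0 assms(1,2) by blast
  moreover have "t n = kq_add (s n) (kq_mult k (t (Suc n)) (kq_cycle k))" for n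
  proof (cases "n < N")
    case True
    then have "N - n = Suc (N - Suc n)" "N - Suc (N - Suc n) = n" by simp_all
    then show ?thesis unfolding t_def by simp
  next
    case False
    then show ?thesis using assms(3)[of n] by (simp add: t_def kq_add_def)
  qed
  ultimately show ?thesis by blast
qed

context M_extension
begin

lemma linext_ladder_gen:
  assumes y: "E_valued y" and a: "is_lim \<alpha>"
  shows "linext y (ladder_gen k \<zeta> \<alpha> n) =
    madd E (madd E (msmul E (y (\<zeta> \<alpha> n) 0) kq_e0) (msmul E (y \<alpha> n) (\<lambda>p. - kq_e0 p)))
      (msmul E (y \<alpha> (Suc n)) (kq_cycle k))"
proof -
  have v: "F_index (\<zeta> \<alpha> n) 0" "F_index \<alpha> n" "F_index \<alpha> (Suc n)" using a by (auto simp: F_index_def)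
  note u = unitv_in_F[OF kq_e0_closed v(1)] unitv_in_F[OF kq_neg_closed[OF kq_e0_closed] v(2)]
    unitv_in_F[OF kq_cycle_closed v(3)]
  show ?thesis
    unfolding ladder_gen_eq linext_add[OF y F_add_closed[OF u(1,2)] u(3)] linext_add[OF y u(1,2)]
      linext_unitv[OF y kq_e0_closed v(1)] linext_unitv[OF y kq_neg_closed[OF kq_e0_closed] v(2)]
      linext_unitv[OF y kq_cycle_closed v(3)] ..
qed

text \<open>Since the relation vanishes in \<open>M\<close>, its image under the chosen lifts lies in \<open>i(KQ)\<close>.\<close>
definition defect :: "'w \<Rightarrow> nat \<Rightarrow> path \<Rightarrow> 'k" where
  "defect \<alpha> n = (SOME r. r \<in> kq_carrier k \<and> linext chosen_lift (ladder_gen k \<zeta> \<alpha> n) = i r)"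

lemma defect:
  assumes a: "is_lim \<alpha>"
  shows "defect \<alpha> n \<in> kq_carrier k" "linext chosen_lift (ladder_gen k \<zeta> \<alpha> n) = i (defect \<alpha> n)"
proof -
  have l: "ladder_gen k \<zeta> \<alpha> n \<in> F0 k" by (rule ladder_gen_in_F0[OF a])
  have "p (linext chosen_lift (ladder_gen k \<zeta> \<alpha> n)) = mzero M"
    using p_linext[OF lifts_chosen_lift l] cls_I[OF ladder_gen_in_I[OF a]] by (simp add: M_ops Q_zero)
  then have "linext chosen_lift (ladder_gen k \<zeta> \<alpha> n) \<in> i ` kq_carrier k"
    using p_ker linext_closed[OF E_valued_chosen_lift F0_in_F[OF l]] by blast
  then have "\<exists>r. r \<in> kq_carrier k \<and> linext chosen_lift (ladder_gen k \<zeta> \<alpha> n) = i r" by blast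
  from someI_ex[OF this] show "defect \<alpha> n \<in> kq_carrier k"
    "linext chosen_lift (ladder_gen k \<zeta> \<alpha> n) = i (defect \<alpha> n)"
    unfolding defect_def by blast+
qed

lemma ends0_defect:
  assumes a: "is_lim \<alpha>"
  shows "ends0 k (defect \<alpha> n)"
proof -
  have yE: "chosen_lift \<xi> m \<in> mcarrier E" for \<xi> m
    using E_valued_chosen_lift unfolding E_valued_def by blast
  have fixes_e0: "msmul E (msmul E (chosen_lift \<xi> m) c) kq_e0 = msmul E (chosen_lift \<xi> m) c"
    if "c \<in> kq_carrier k" "kq_mult k c kq_e0 = c" for \<xi> m c
    using smul_mult'[OF yE that(1) kq_e0_closed] that(2) by simp
  let ?m = "\<lambda>p. - kq_e0 p"
  have m: "?m \<in> kq_carrier k" "kq_mult k ?m kq_e0 = ?m"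
    by (simp_all add: kq_neg_closed kq_mult_neg_left kq_mult_e0_e0)
  note A = fixes_e0[OF kq_e0_closed kq_mult_e0_e0] and B = fixes_e0[OF m]
    and C = fixes_e0[OF kq_cycle_closed kq_mult_cycle_e0]
  have abc: "msmul E (chosen_lift (\<zeta> \<alpha> n) 0) kq_e0 \<in> mcarrier E"
    "msmul E (chosen_lift \<alpha> n) ?m \<in> mcarrier E"
    "msmul E (chosen_lift \<alpha> (Suc n)) (kq_cycle k) \<in> mcarrier E"
    using smul_closed'[OF yE] m(1) by auto
  have "msmul E (i (defect \<alpha> n)) kq_e0 = i (defect \<alpha> n)"
    unfolding defect(2)[OF a, symmetric] linext_ladder_gen[OF E_valued_chosen_lift a]
      smul_add'[OF add_closed[OF abc(1,2)] abc(3) kq_e0_closed] smul_add'[OF abc(1,2) kq_e0_closed]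
      A B C ..
  then have "i (kq_mult k (defect \<alpha> n) kq_e0) = i (defect \<alpha> n)"
    using i_smul[OF defect(1)[OF a] kq_e0_closed] by simp
  then have "kq_mult k (defect \<alpha> n) kq_e0 = defect \<alpha> n"
    using inj_onD[OF i_inj] kq_mult_closed[OF defect(1)[OF a] kq_e0_closed] defect(1)[OF a] by blast
  then show ?thesis unfolding ends0_iff .
qed

lemma smul_add_i:
  assumes "y \<in> mcarrier E" "t \<in> kq_carrier k" "r \<in> kq_carrier k"
  shows "msmul E (madd E y (i t)) r = madd E (msmul E y r) (i (kq_mult k t r))"
  using smul_add[OF assms(1) i_closed[OF assms(2)]] assms(3) i_smul[OF assms(2,3)] by simp

lemma linext_shifted_ladder_gen:
  assumes t: "\<And>\<xi> n. t \<xi> n \<in> kq_carrier k" and a: "is_lim \<alpha>"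
  shows "linext (\<lambda>\<xi> n. madd E (chosen_lift \<xi> n) (i (t \<xi> n))) (ladder_gen k \<zeta> \<alpha> n) =
    i (kq_add (defect \<alpha> n) (kq_add (kq_add (kq_mult k (t (\<zeta> \<alpha> n) 0) kq_e0)
      (kq_mult k (t \<alpha> n) (\<lambda>p. - kq_e0 p))) (kq_mult k (t \<alpha> (Suc n)) (kq_cycle k))))"
proof -
  let ?y = "\<lambda>\<xi> n. madd E (chosen_lift \<xi> n) (i (t \<xi> n))" and ?m = "\<lambda>p. - kq_e0 p"
  let ?A = "msmul E (chosen_lift (\<zeta> \<alpha> n) 0) kq_e0" and ?B = "msmul E (chosen_lift \<alpha> n) ?m"
    and ?C = "msmul E (chosen_lift \<alpha> (Suc n)) (kq_cycle k)"
  let ?tA = "kq_mult k (t (\<zeta> \<alpha> n) 0) kq_e0" and ?tB = "kq_mult k (t \<alpha> n) ?m"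
    and ?tC = "kq_mult k (t \<alpha> (Suc n)) (kq_cycle k)"
  have yE: "E_valued ?y"
    using lifts_gens_shift[where t = t, OF lifts_chosen_lift t] unfolding lifts_gens_def by blast
  have cE: "chosen_lift \<xi> n \<in> mcarrier E" for \<xi> n
    using E_valued_chosen_lift unfolding E_valued_def by blast
  have m: "?m \<in> kq_carrier k" by (rule kq_neg_closed[OF kq_e0_closed])
  have ABC: "?A \<in> mcarrier E" "?B \<in> mcarrier E" "?C \<in> mcarrier E"
    using smul_closed' cE m by auto
  have tABC: "?tA \<in> kq_carrier k" "?tB \<in> kq_carrier k" "?tC \<in> kq_carrier k"
    by (auto intro: kq_mult_closed t m)
  have "linext ?y (ladder_gen k \<zeta> \<alpha> n)
      = madd E (madd E (madd E ?A (i ?tA)) (madd E ?B (i ?tB))) (madd E ?C (i ?tC))"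
    unfolding linext_ladder_gen[OF yE a] smul_add_i[OF cE t kq_e0_closed]
      smul_add_i[OF cE t m] smul_add_i[OF cE t kq_cycle_closed] ..
  also have "\<dots> = madd E (madd E (madd E ?A ?B) ?C) (madd E (madd E (i ?tA) (i ?tB)) (i ?tC))"
    using ABC tABC i_closed by (intro add_interchange3) auto
  also have "\<dots> = i (kq_add (defect \<alpha> n) (kq_add (kq_add ?tA ?tB) ?tC))"
    using linext_ladder_gen[OF E_valued_chosen_lift a, of n] defect[OF a, of n] tABC
    by (simp add: i_add kq_add_closed)
  finally show ?thesis .
qed

text \<open>\<open>f\<close> corrects the lifts at the non-limit ordinals; once \<open>f (\<zeta> \<alpha> n)\<close> agrees with the
  defect, the finitely many remaining defects along the ladder of \<open>\<alpha>\<close> are absorbed by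
  back-solving \<open>t\<^sub>n = s\<^sub>n + t\<^sub>n\<^sub>+\<^sub>1 c\<close>.\<close>
lemma exists_kills_relations:
  assumes nonlim: "\<And>\<alpha> n. is_lim \<alpha> \<Longrightarrow> \<not> is_lim (\<zeta> \<alpha> n)"
    and f: "\<And>\<gamma>. f \<gamma> \<in> kq_carrier k"
    and N: "\<And>\<alpha> n. is_lim \<alpha> \<Longrightarrow> N \<alpha> \<le> n \<Longrightarrow> f (\<zeta> \<alpha> n) = defect \<alpha> n"
  shows "\<exists>y. kills_relations y"
proof -
  define s where "s \<alpha> n = kq_add (defect \<alpha> n) (\<lambda>q. - kq_mult k (f (\<zeta> \<alpha> n)) kq_e0 q)" for \<alpha> n
  have fe: "kq_mult k (f \<gamma>) kq_e0 \<in> kq_carrier k" for \<gamma> by (rule kq_mult_closed[OF f kq_e0_closed])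
  have "\<exists>t. (\<forall>n. t n \<in> kq_carrier k \<and> ends0 k (t n)) \<and>
      (\<forall>n. t n = kq_add (s \<alpha> n) (kq_mult k (t (Suc n)) (kq_cycle k)))" if a: "is_lim \<alpha>" for \<alpha>
  proof (rule exists_cycle_back_solution)
    show "s \<alpha> n \<in> kq_carrier k" for n
      unfolding s_def by (rule kq_add_closed[OF defect(1)[OF a] kq_neg_closed[OF fe]])
    show "ends0 k (s \<alpha> n)" for n
      unfolding s_def using ends0_defect[OF a] ends0_iff[of k "kq_mult k (f (\<zeta> \<alpha> n)) kq_e0"]
      by (intro ends0_add) (auto simp: kq_mult_assoc f kq_mult_e0_e0 ends0_iff kq_mult_neg_left)
    show "s \<alpha> n = (\<lambda>_. 0)" if "N \<alpha> \<le> n" for n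
      using ends0_defect[OF a, of n] N[OF a that] unfolding s_def ends0_iff by (simp add: kq_add_def)
  qed
  then obtain tl where tl: "\<And>\<alpha> n. is_lim \<alpha> \<Longrightarrow> tl \<alpha> n \<in> kq_carrier k \<and> ends0 k (tl \<alpha> n)"
    "\<And>\<alpha> n. is_lim \<alpha> \<Longrightarrow> tl \<alpha> n = kq_add (s \<alpha> n) (kq_mult k (tl \<alpha> (Suc n)) (kq_cycle k))"
    by metis
  define t where "t \<xi> n = (if is_lim \<xi> then tl \<xi> n else (\<lambda>q. - f \<xi> q))" for \<xi> n
  have t: "t \<xi> n \<in> kq_carrier k" for \<xi> n using tl(1) kq_neg_closed[OF f] by (simp add: t_def)
  define y where "y \<xi> n = madd E (chosen_lift \<xi> n) (i (t \<xi> n))" for \<xi> n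
  have "linext y (ladder_gen k \<zeta> \<alpha> n) = mzero E" if a: "is_lim \<alpha>" for \<alpha> n
  proof -
    let ?tB = "kq_mult k (t \<alpha> n) (\<lambda>p. - kq_e0 p)" and ?tC = "kq_mult k (t \<alpha> (Suc n)) (kq_cycle k)"
    have ta: "t \<alpha> m = tl \<alpha> m" for m using a by (simp add: t_def)
    have tA: "kq_mult k (t (\<zeta> \<alpha> n) 0) kq_e0 = (\<lambda>q. - kq_mult k (f (\<zeta> \<alpha> n)) kq_e0 q)"
      using nonlim[OF a] by (simp add: t_def kq_mult_neg_left)
    have tB: "?tB = (\<lambda>q. - t \<alpha> n q)"
      unfolding ta kq_mult_neg_right using tl(1)[OF a, of n] by (simp add: ends0_iff)
    have tC: "t \<alpha> n = kq_add (s \<alpha> n) ?tC" unfolding ta by (rule tl(2)[OF a])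
    have "kq_add (defect \<alpha> n) (kq_add (kq_add (kq_mult k (t (\<zeta> \<alpha> n) 0) kq_e0) ?tB) ?tC) = (\<lambda>_. 0)"
      unfolding tA tB unfolding tC by (simp add: kq_add_def s_def fun_eq_iff)
    then show ?thesis unfolding y_def linext_shifted_ladder_gen[OF t a] by (simp add: i_zero)
  qed
  moreover have "lifts_gens y" unfolding y_def by (rule lifts_gens_shift[OF lifts_chosen_lift t])
  ultimately show ?thesis unfolding kills_relations_def by blast
qed

end

lemma UP_uniformize:
  fixes \<zeta> :: "'w::wellorder \<Rightarrow> nat \<Rightarrow> 'w" and d :: "'w \<Rightarrow> nat \<Rightarrow> 'a"
  assumes up: "UP TYPE('w)" and \<zeta>: "ladder_system \<zeta>"
    and A: "countable A" "A \<noteq> {}" and d: "\<And>\<alpha> n. is_lim \<alpha> \<Longrightarrow> d \<alpha> n \<in> A"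
  shows "\<exists>f. (\<forall>\<gamma>. f \<gamma> \<in> A) \<and> (\<forall>\<alpha>. is_lim \<alpha> \<longrightarrow> (\<exists>N. \<forall>n\<ge>N. f (\<zeta> \<alpha> n) = d \<alpha> n))"
proof -
  have "ladder_system \<zeta> \<and> (\<forall>\<alpha> n. is_lim \<alpha> \<longrightarrow> to_nat_on A (d \<alpha> n) \<in> (\<lambda>_. UNIV) (\<zeta> \<alpha> n))"
    using \<zeta> by simp
  with spec[OF spec[OF spec[OF up[unfolded UP_def], of "\<lambda>_. UNIV"], of \<zeta>],
      of "\<lambda>\<alpha> n. to_nat_on A (d \<alpha> n)"]
  obtain g :: "'w \<Rightarrow> nat"
    where g: "\<And>\<alpha>. is_lim \<alpha> \<Longrightarrow> finite {n. g (\<zeta> \<alpha> n) \<noteq> to_nat_on A (d \<alpha> n)}"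
    by blast
  define f where "f \<gamma> = from_nat_into A (g \<gamma>)" for \<gamma>
  have "\<exists>N. \<forall>n\<ge>N. f (\<zeta> \<alpha> n) = d \<alpha> n" if a: "is_lim \<alpha>" for \<alpha>
  proof -
    obtain N where "\<forall>n\<in>{n. g (\<zeta> \<alpha> n) \<noteq> to_nat_on A (d \<alpha> n)}. n < N"
      using g[OF a] finite_nat_set_iff_bounded by blast
    then have "g (\<zeta> \<alpha> n) = to_nat_on A (d \<alpha> n)" if "N \<le> n" for n using that by force
    then have "\<forall>n\<ge>N. f (\<zeta> \<alpha> n) = d \<alpha> n" unfolding f_def using A(1) d[OF a] by simp
    then show ?thesis by blast
  qed
  moreover have "f \<gamma> \<in> A" for \<gamma> unfolding f_def using A(2) by (rule from_nat_into)
  ultimately show ?thesis by blast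
qed

lemma countable_kq_carrier:
  assumes "countable (UNIV :: 'k::field set)"
  shows "countable (kq_carrier k :: (path \<Rightarrow> 'k) set)"
proof -
  define graph where "graph X = {(p, X p) | p. X p \<noteq> 0}" for X :: "path \<Rightarrow> 'k"
  have "countable (SIGMA p:(UNIV :: path set). (UNIV :: 'k set))"
    using assms by (intro countable_SIGMA) auto
  then have "countable (UNIV :: (path \<times> 'k) set)"
    by (simp add: UNIV_Times_UNIV[symmetric] del: UNIV_Times_UNIV)
  moreover have "graph ` kq_carrier k \<subseteq> {A. finite A \<and> A \<subseteq> UNIV}"
  proof
    fix A assume "A \<in> graph ` kq_carrier k"
    then obtain X where X: "X \<in> kq_carrier k" "A = graph X" by blast
    have "graph X = (\<lambda>p. (p, X p)) ` {p. X p \<noteq> 0}" unfolding graph_def by auto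
    then show "A \<in> {A. finite A \<and> A \<subseteq> UNIV}" using kq_carrierD(1)[OF X(1)] X(2) by auto
  qed
  ultimately have "countable (graph ` kq_carrier k)"
    using countable_Collect_finite_subset countable_subset by blast
  moreover have "inj_on graph (kq_carrier k)"
  proof (rule inj_onI)
    fix X Y assume "graph X = graph Y"
    then have e: "(p, v) \<in> graph X \<longleftrightarrow> (p, v) \<in> graph Y" for p v by simp
    have m: "(p, v) \<in> graph Z \<longleftrightarrow> v = Z p \<and> Z p \<noteq> 0" for Z p v
      unfolding graph_def by (cases p) auto
    show "X = Y"
    proof
      fix p show "X p = Y p" using e[of p "X p"] e[of p "Y p"] unfolding m by auto
    qed
  qed
  ultimately show ?thesis by (rule countable_image_inj_on)
qed

lemma (in ladder_quotient) ext1_zero_M: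
  assumes up: "UP TYPE('w)" and \<zeta>: "ladder_system \<zeta>"
    and nonlim: "\<And>\<alpha> n. is_lim \<alpha> \<Longrightarrow> \<not> is_lim (\<zeta> \<alpha> n)"
    and countable: "countable (kq_carrier k :: (path \<Rightarrow> 'k) set)"
  shows "ext1_zero TYPE('e) (KQ k) M (KQmod k)"
  unfolding ext1_zero_def
proof (intro allI impI, elim conjE)
  fix E :: "('e, path \<Rightarrow> 'k) rmod" and i p
  assume "right_module (KQ k) E" "rmod_hom (KQ k) (KQmod k) E i" "rmod_hom (KQ k) E M p"
    "inj_on i (mcarrier (KQmod k))" "p ` mcarrier E = mcarrier M"
    "\<forall>x\<in>mcarrier E. p x = mzero M \<longleftrightarrow> x \<in> i ` mcarrier (KQmod k)"
  then interpret M_extension k \<zeta> I E i p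
    by unfold_locales (simp_all add: I_def)
  obtain f where f: "\<And>\<gamma>. f \<gamma> \<in> kq_carrier k"
    and agree: "\<And>\<alpha>. is_lim \<alpha> \<Longrightarrow> \<exists>N. \<forall>n\<ge>N. f (\<zeta> \<alpha> n) = defect \<alpha> n"
  proof -
    have ne: "(kq_carrier k :: (path \<Rightarrow> 'k) set) \<noteq> {}" using kq_zero_closed by blast
    show ?thesis
      using UP_uniformize[OF up \<zeta> countable ne, where d = defect] defect(1) that by blast
  qed
  have "\<forall>\<alpha>. \<exists>N. is_lim \<alpha> \<longrightarrow> (\<forall>n\<ge>N. f (\<zeta> \<alpha> n) = defect \<alpha> n)" using agree by blast
  then obtain N where "\<And>\<alpha> n. is_lim \<alpha> \<Longrightarrow> N \<alpha> \<le> n \<Longrightarrow> f (\<zeta> \<alpha> n) = defect \<alpha> n"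
    by (metis choice)
  then obtain y where "kills_relations y" using exists_kills_relations[where f = f and N = N, OF nonlim f] by blast
  then show "\<exists>s. rmod_hom (KQ k) M E s \<and> (\<forall>m\<in>mcarrier M. p (s m) = m)"
    using splitting_of_kills_relations by blast
qed

section \<open>Facts about omega_1\<close>

lemma countable_atMost_omega1:
  assumes "omega1_type TYPE('w::wellorder)" shows "countable {..x::'w}"
proof -
  have "{..x} = {y. y < x} \<union> {x}" by auto
  then show ?thesis using assms unfolding omega1_type_def by auto
qed

lemma omega1_countable_bounded:
  assumes o: "omega1_type TYPE('w::wellorder)" and S: "countable (S :: 'w set)"
  shows "\<exists>b. \<forall>x\<in>S. x < b"
proof (rule ccontr)
  assume "\<not> ?thesis"
  then have "UNIV \<subseteq> (\<Union>x\<in>S. {..x})" by (auto simp: not_less)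
  moreover have "countable (\<Union>x\<in>S. {..x})" using S countable_atMost_omega1[OF o] by auto
  ultimately show False using o countable_subset unfolding omega1_type_def by blast
qed

lemma osucc_gt: "omega1_type TYPE('w::wellorder) \<Longrightarrow> (x::'w) < osucc x"
  unfolding osucc_def using omega1_countable_bounded[of "{x}"] by (metis LeastI_ex countable_finite finite.intros singletonI)

lemma osucc_not_lim:
  assumes o: "omega1_type TYPE('w::wellorder)" shows "\<not> is_lim (osucc (x::'w))"
proof
  assume "is_lim (osucc x)"
  then obtain \<gamma> where "x < \<gamma>" "\<gamma> < osucc x" using osucc_gt[OF o, of x] unfolding is_lim_def by blast
  then show False using Least_le[of "\<lambda>y. x < y" \<gamma>] unfolding osucc_def by simp
qed

lemma good_ladder_not_lim:
  assumes "omega1_type TYPE('w::wellorder)" "good_ladder (\<zeta> :: 'w \<Rightarrow> nat \<Rightarrow> 'w)" "is_lim \<alpha>"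
  shows "\<not> is_lim (\<zeta> \<alpha> n)"
proof -
  obtain \<delta> where "\<zeta> \<alpha> n = (osucc ^^ Suc n) \<delta>" using assms(2,3) unfolding good_ladder_def by blast
  then show ?thesis using osucc_not_lim[OF assms(1)] by simp
qed

text \<open>The closure argument: iterating \<open>\<beta> \<mapsto> sup (h \<gamma> for \<gamma> \<le> \<beta>)\<close> \<open>\<omega>\<close> times yields a
  limit \<open>\<alpha>\<close> closed under \<open>h\<close>.\<close>
lemma omega1_exists_closed_limit:
  assumes o: "omega1_type TYPE('w::wellorder)" and h: "\<And>\<gamma>. countable (h \<gamma> :: 'w set)"
  shows "\<exists>\<alpha>::'w. is_lim \<alpha> \<and> (\<forall>\<gamma><\<alpha>. \<forall>\<xi>\<in>h \<gamma>. \<xi> < \<alpha>)"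
proof -
  define nx where "nx \<beta> = (SOME b. \<beta> < b \<and> (\<forall>\<gamma>\<le>\<beta>. \<forall>\<xi>\<in>h \<gamma>. \<xi> < b))" for \<beta> :: 'w
  have nx: "\<beta> < nx \<beta> \<and> (\<forall>\<gamma>\<le>\<beta>. \<forall>\<xi>\<in>h \<gamma>. \<xi> < nx \<beta>)" for \<beta>
  proof -
    have "countable (insert \<beta> (\<Union>\<gamma>\<in>{..\<beta>}. h \<gamma>))"
      using countable_atMost_omega1[OF o, of \<beta>] h by blast
    then obtain b where "\<forall>x\<in>insert \<beta> (\<Union>\<gamma>\<in>{..\<beta>}. h \<gamma>). x < b"
      using omega1_countable_bounded[OF o] by blast
    then have "\<beta> < b \<and> (\<forall>\<gamma>\<le>\<beta>. \<forall>\<xi>\<in>h \<gamma>. \<xi> < b)" by blast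
    then show ?thesis unfolding nx_def by (rule someI)
  qed
  define sq where "sq j = (nx ^^ j) undefined" for j
  have sq_Suc: "sq (Suc j) = nx (sq j)" for j by (simp add: sq_def)
  have "\<exists>b. \<forall>j. sq j < b" using omega1_countable_bounded[OF o, of "range sq"] by blast
  define \<alpha> where "\<alpha> = (LEAST b. \<forall>j. sq j < b)"
  have lt: "sq j < \<alpha>" for j unfolding \<alpha>_def using LeastI_ex[OF \<open>\<exists>b. _\<close>] by blast
  have below: "\<exists>j. \<beta> \<le> sq j" if "\<beta> < \<alpha>" for \<beta>
  proof (rule ccontr)
    assume "\<not> ?thesis"
    then have "\<alpha> \<le> \<beta>" unfolding \<alpha>_def by (intro Least_le) (auto simp: not_le)
    then show False using that by simp
  qed
  have "is_lim \<alpha>" unfolding is_lim_def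
  proof (intro conjI allI impI)
    show "\<exists>\<beta>. \<beta> < \<alpha>" using lt by blast
    fix \<beta> assume "\<beta> < \<alpha>"
    then obtain j where "\<beta> \<le> sq j" using below by blast
    then show "\<exists>\<gamma>. \<beta> < \<gamma> \<and> \<gamma> < \<alpha>"
      using nx[of "sq j"] lt[of "Suc j"] sq_Suc[of j] by (metis order.strict_trans1)
  qed
  moreover have "\<forall>\<gamma><\<alpha>. \<forall>\<xi>\<in>h \<gamma>. \<xi> < \<alpha>"
  proof (intro allI impI ballI)
    fix \<gamma> \<xi> assume "\<gamma> < \<alpha>" "\<xi> \<in> h \<gamma>"
    then obtain j where "\<gamma> \<le> sq j" using below by blast
    then have "\<xi> < nx (sq j)" using nx[of "sq j"] \<open>\<xi> \<in> h \<gamma>\<close> by blast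
    then show "\<xi> < \<alpha>" using lt[of "Suc j"] sq_Suc[of j] by simp
  qed
  ultimately show ?thesis by blast
qed

lemma omega1_exists_limit_outside_supports:
  fixes x :: "'w::wellorder \<Rightarrow> ('w, 'k::field) Fel"
  assumes o: "omega1_type TYPE('w)" and x: "\<And>\<gamma>. x \<gamma> \<in> F_carrier k"
  shows "\<exists>\<alpha>. is_lim \<alpha> \<and> (\<forall>\<gamma><\<alpha>. \<forall>m. x \<gamma> \<alpha> m = (\<lambda>_. 0))"
proof -
  define h where "h \<gamma> = fst ` {(\<xi>, m). x \<gamma> \<xi> m \<noteq> (\<lambda>_. 0)}" for \<gamma>
  have "countable (h \<gamma>)" for \<gamma>
    unfolding h_def by (intro countable_finite finite_imageI F_carrierD(1)[OF x])
  then obtain \<alpha> where "is_lim \<alpha>" and closed: "\<forall>\<gamma><\<alpha>. \<forall>\<xi>\<in>h \<gamma>. \<xi> < \<alpha>"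
    using omega1_exists_closed_limit[OF o] by blast
  moreover have "x \<gamma> \<alpha> m = (\<lambda>_. 0)" if "\<gamma> < \<alpha>" for \<gamma> m
  proof (rule ccontr)
    assume "x \<gamma> \<alpha> m \<noteq> (\<lambda>_. 0)"
    then have "\<alpha> \<in> h \<gamma>" unfolding h_def by force
    then show False using closed that by blast
  qed
  ultimately show ?thesis by blast
qed

section \<open>M is not projective\<close>

lemma kq_cycle_divisible_zero:
  assumes w: "\<And>n. w n = kq_mult k (w (Suc n)) (kq_cycle k)"
  shows "w n = (\<lambda>_. 0)"
proof -
  have long: "\<forall>n p. w n p \<noteq> 0 \<longrightarrow> j * Suc k \<le> length (snd p)" for j
  proof (induction j)
    case (Suc j)
    show ?case
    proof (intro allI impI)
      fix n p assume "w n p \<noteq> 0"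
      then obtain q where "w (Suc n) q \<noteq> 0" "p = path_cat q (0, cycle_arrows k)"
        using kq_mult_cycle_right_nonzeroD w[of n] by metis
      then show "Suc j * Suc k \<le> length (snd p)" using Suc by (fastforce simp: path_cat_def)
    qed
  qed simp
  show ?thesis
  proof (rule ext, rule ccontr)
    fix p assume "w n p \<noteq> 0"
    then have "Suc (length (snd p)) * Suc k \<le> length (snd p)" using long by blast
    then show False by simp
  qed
qed

definition cycle_pow_path :: "nat \<Rightarrow> nat \<Rightarrow> path" where
  "cycle_pow_path k m = (0, concat (replicate m (cycle_arrows k)))"

lemma ptgt_cycle_pow_path: "ptgt k (cycle_pow_path k m) = 0"
proof (cases m)
  case (Suc j)
  have "last (concat (replicate (Suc j) (cycle_arrows k))) = k"
    by (induction j) (simp_all add: last_append)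
  then show ?thesis using Suc by (simp add: ptgt_def cycle_pow_path_def cyc_tgt_def)
qed (simp add: ptgt_def cycle_pow_path_def)

lemma kq_mult_cycle_at_cycle_pow_path:
  "kq_mult k (kq_cycle k) Y (cycle_pow_path k (Suc m)) = Y (cycle_pow_path k m)"
  using kq_mult_cycle_left_at[of k Y "concat (replicate m (cycle_arrows k))"]
  by (simp add: cycle_pow_path_def)

text \<open>It is \<open>1\<close> on \<open>e\<^sup>\<alpha>\<^sup>,\<^sup>0\<^sub>0\<close> and, since the
  relation \<open>e\<^sup>\<zeta>\<^sub>0 - e\<^sup>\<alpha>\<^sup>,\<^sup>n\<^sub>0 + e\<^sup>\<alpha>\<^sup>,\<^sup>n\<^sup>+\<^sup>1\<^sub>0 c\<close> has no \<open>\<alpha>\<close>-coordinate at \<open>\<zeta>\<close>, it vanishes on \<open>I\<close>.\<close>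
definition cycle_functional :: "nat \<Rightarrow> 'w \<Rightarrow> ('w, 'k::field) Fel \<Rightarrow> 'k" where
  "cycle_functional k \<alpha> x = (\<Sum>m\<in>{m. x \<alpha> m \<noteq> (\<lambda>_. 0)}. x \<alpha> m (cycle_pow_path k m))"

lemma cycle_functional_eq_sum:
  assumes "finite S" "{m. x \<alpha> m \<noteq> (\<lambda>_. 0)} \<subseteq> S"
  shows "cycle_functional k \<alpha> x = (\<Sum>m\<in>S. x \<alpha> m (cycle_pow_path k m))"
  unfolding cycle_functional_def by (rule sum.mono_neutral_left) (use assms in auto)

lemma finite_coordinates: "x \<in> F_carrier k \<Longrightarrow> finite {m. x \<alpha> m \<noteq> (\<lambda>_. 0)}"
  by (rule finite_subset[OF _ finite_imageI[OF F_carrierD(1), of x k snd]]) (auto simp: image_iff)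

lemma cycle_functional_add:
  assumes x: "x \<in> F_carrier k" and y: "y \<in> F_carrier k"
  shows "cycle_functional k \<alpha> (\<lambda>\<xi> n p. x \<xi> n p + y \<xi> n p) = cycle_functional k \<alpha> x + cycle_functional k \<alpha> y"
proof -
  let ?S = "{m. x \<alpha> m \<noteq> (\<lambda>_. 0)} \<union> {m. y \<alpha> m \<noteq> (\<lambda>_. 0)}"
  have fin: "finite ?S" using finite_coordinates x y by auto
  have "cycle_functional k \<alpha> (\<lambda>\<xi> n p. x \<xi> n p + y \<xi> n p)
      = (\<Sum>m\<in>?S. x \<alpha> m (cycle_pow_path k m) + y \<alpha> m (cycle_pow_path k m))"
    by (rule cycle_functional_eq_sum[OF fin]) auto
  then show ?thesis by (simp add: sum.distrib cycle_functional_eq_sum[OF fin])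
qed

lemma cycle_functional_unitv_e0: "cycle_functional k \<alpha> (unitv \<alpha> 0 kq_e0) = (1 :: 'k::field)"
proof -
  have "cycle_functional k \<alpha> (unitv \<alpha> 0 kq_e0) =
      (\<Sum>m\<in>{0}. unitv \<alpha> 0 kq_e0 \<alpha> m (cycle_pow_path k m))"
    by (rule cycle_functional_eq_sum) (auto simp: unitv_def)
  then show ?thesis by (simp add: unitv_def kq_e0_def cycle_pow_path_def)
qed

context ladder_quotient
begin

definition cycle_functional_null :: "'w \<Rightarrow> ('w, 'k) Fel set" where
  "cycle_functional_null \<alpha> =
    {x \<in> F_carrier k. \<forall>r\<in>kq_carrier k. cycle_functional k \<alpha> (msmul (Fmod k) x r) = 0}"

lemma is_submodule_cycle_functional_null:
  "is_submodule (KQ k) (Fmod k) (cycle_functional_null \<alpha>)"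
  unfolding is_submodule_def
proof (intro conjI ballI)
  fix x y assume x: "x \<in> cycle_functional_null \<alpha>" and y: "y \<in> cycle_functional_null \<alpha>"
  have xF: "x \<in> F_carrier k" and yF: "y \<in> F_carrier k"
    using x y by (auto simp: cycle_functional_null_def)
  have "msmul (Fmod k) (madd (Fmod k) x y) r
      = (\<lambda>\<xi> n p. msmul (Fmod k) x r \<xi> n p + msmul (Fmod k) y r \<xi> n p)" if "r \<in> kq_carrier k" for r
    using kq_mult_add_left[OF F_carrierD(2)[OF xF] F_carrierD(2)[OF yF] that]
    by (simp add: kq_add_def)
  then show "madd (Fmod k) x y \<in> cycle_functional_null \<alpha>"
    using x y F_add_closed[OF xF yF] cycle_functional_add[OF F_smul_closed[OF xF] F_smul_closed[OF yF]]
    by (simp add: cycle_functional_null_def)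
next
  fix x and r :: "path \<Rightarrow> 'k" assume x: "x \<in> cycle_functional_null \<alpha>" and r: "r \<in> carrier (KQ k)"
  have xF: "x \<in> F_carrier k" and r: "r \<in> kq_carrier k"
    using x r by (auto simp: cycle_functional_null_def)
  have "cycle_functional k \<alpha> (msmul (Fmod k) (msmul (Fmod k) x r) r') = 0"
    if "r' \<in> kq_carrier k" for r'
  proof -
    have "msmul (Fmod k) (msmul (Fmod k) x r) r' = msmul (Fmod k) x (kq_mult k r r')"
      using kq_mult_assoc[OF F_carrierD(2)[OF xF] r that] by simp
    then show ?thesis using x kq_mult_closed[OF r that] unfolding cycle_functional_null_def by simp
  qed
  then show "msmul (Fmod k) x r \<in> cycle_functional_null \<alpha>"
    using F_smul_closed[OF xF r] by (simp add: cycle_functional_null_def)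
qed (auto simp: cycle_functional_null_def cycle_functional_def)

lemma ladder_gen_in_cycle_functional_null:
  assumes a: "is_lim \<alpha>" and b: "is_lim \<beta>" and nl: "\<not> is_lim (\<zeta> \<beta> m)"
  shows "ladder_gen k \<zeta> \<beta> m \<in> cycle_functional_null \<alpha>"
proof -
  have "\<zeta> \<beta> m \<noteq> \<alpha>" using a nl by auto
  then have coord: "ladder_gen k \<zeta> \<beta> m \<alpha> j = (if \<beta> = \<alpha> \<and> j = m then (\<lambda>p. - kq_e0 p)
      else if \<beta> = \<alpha> \<and> j = Suc m then kq_cycle k else (\<lambda>_. 0))" for j
    unfolding ladder_gen_eq by (auto simp: unitv_def fun_eq_iff)
  have "cycle_functional k \<alpha> (msmul (Fmod k) (ladder_gen k \<zeta> \<beta> m) r) = 0" for r :: "path \<Rightarrow> 'k"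
  proof -
    have "cycle_functional k \<alpha> (msmul (Fmod k) (ladder_gen k \<zeta> \<beta> m) r) =
        (\<Sum>j\<in>{m, Suc m}. msmul (Fmod k) (ladder_gen k \<zeta> \<beta> m) r \<alpha> j (cycle_pow_path k j))"
      by (rule cycle_functional_eq_sum) (auto simp: coord)
    also have "\<dots> = (if \<beta> = \<alpha> then - r (cycle_pow_path k m) + r (cycle_pow_path k m) else 0)"
      by (simp add: coord kq_mult_neg_left kq_mult_e0_left kq_mult_cycle_at_cycle_pow_path)
        (simp add: cycle_pow_path_def)
    finally show ?thesis by simp
  qed
  moreover have "(ladder_gen k \<zeta> \<beta> m :: ('w, 'k) Fel) \<in> F_carrier k"
    by (intro F0_in_F ladder_gen_in_F0 b)
  ultimately show ?thesis by (simp add: cycle_functional_null_def)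
qed

lemma cycle_functional_I:
  assumes a: "is_lim \<alpha>" and nonlim: "\<And>\<beta> m. is_lim \<beta> \<Longrightarrow> \<not> is_lim (\<zeta> \<beta> m)" and u: "u \<in> I"
  shows "cycle_functional k \<alpha> u = 0"
proof -
  have "G_sub k \<zeta> \<beta> \<subseteq> cycle_functional_null \<alpha>" if b: "is_lim \<beta>" for \<beta>
    unfolding G_sub_def using ladder_gen_in_cycle_functional_null[OF a b nonlim[OF b]]
    by (intro gen_submodule_least[OF is_submodule_cycle_functional_null]) blast
  then have "I \<subseteq> cycle_functional_null \<alpha>"
    unfolding I_def I_sub_def by (intro gen_submodule_least[OF is_submodule_cycle_functional_null]) blast
  then have "u \<in> F_carrier k" "cycle_functional k \<alpha> (msmul (Fmod k) u (kq_one k)) = 0"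
    using u kq_one_closed unfolding cycle_functional_null_def by blast+
  moreover have "msmul (Fmod k) u (kq_one k) = u"
    using kq_mult_one_right[OF F_carrierD(2)[OF \<open>u \<in> F_carrier k\<close>]] by simp
  ultimately show ?thesis by simp
qed

end

context ladder_quotient
begin

abbreviation F0mod :: "(('w, 'k) Fel, path \<Rightarrow> 'k) rmod" where
  "F0mod \<equiv> submod (Fmod k) (F0 k)"

lemma M_section_of_projective:
  assumes "projective TYPE(('w, 'k) Fel) (KQ k) M"
  shows "\<exists>s. rmod_hom (KQ k) M F0mod s \<and> (\<forall>m\<in>mcarrier M. cls (s m) = m)"
proof -
  have "rmod_hom (KQ k) F0mod M cls"
    unfolding rmod_hom_def submod_simps M_ops M_carrier
  proof (intro conjI ballI)
    fix x y :: "('w, 'k) Fel" assume "x \<in> F0 k" "y \<in> F0 k"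
    then show "cls (madd (Fmod k) x y) = madd Q (cls x) (cls y)"
      using Q_add[OF F0_in_F F0_in_F] by simp
  next
    fix x :: "('w, 'k) Fel" and r :: "path \<Rightarrow> 'k" assume "x \<in> F0 k" "r \<in> carrier (KQ k)"
    then show "cls (msmul (Fmod k) x r) = msmul Q (cls x) r"
      using Q_smul[OF F0_in_F] by simp
  qed simp
  moreover have "cls ` mcarrier F0mod = mcarrier M" by (simp add: M_carrier)
  ultimately show ?thesis
    using assms right_module_F0 unfolding projective_def by blast
qed

lemma msmul_cls_unitv_e0:
  assumes "F_index \<xi> n" "c \<in> kq_carrier k" "starts0 c"
  shows "msmul Q (cls (unitv \<xi> n kq_e0)) c = cls (unitv \<xi> n c)"
  using Q_smul[OF unitv_in_F[OF kq_e0_closed assms(1)] assms(2)] msmul_unitv[of k \<xi> n kq_e0 c]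
    kq_mult_e0_starts0[OF assms(3), of k]
  by simp

lemma ladder_relation_in_M:
  assumes a: "is_lim \<alpha>"
  shows "madd Q (madd Q (cls (unitv (\<zeta> \<alpha> n) 0 kq_e0))
      (msmul Q (cls (unitv \<alpha> n kq_e0)) (\<lambda>p. - kq_e0 p)))
      (msmul Q (cls (unitv \<alpha> (Suc n) kq_e0)) (kq_cycle k)) = cls (\<lambda>_ _ _. 0)"
proof -
  have v: "F_index (\<zeta> \<alpha> n) 0" "F_index \<alpha> n" "F_index \<alpha> (Suc n)" using a by (auto simp: F_index_def)
  have m: "(\<lambda>p. - kq_e0 p) \<in> kq_carrier k" "starts0 (\<lambda>p. - kq_e0 p :: 'k)"
    by (simp_all add: kq_neg_closed starts0_neg starts0_e0)
  note u = unitv_in_F[OF kq_e0_closed v(1)] unitv_in_F[OF m(1) v(2)] unitv_in_F[OF kq_cycle_closed v(3)]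
  have "madd Q (madd Q (cls (unitv (\<zeta> \<alpha> n) 0 kq_e0))
      (msmul Q (cls (unitv \<alpha> n kq_e0)) (\<lambda>p. - kq_e0 p)))
      (msmul Q (cls (unitv \<alpha> (Suc n) kq_e0)) (kq_cycle k)) = cls (ladder_gen k \<zeta> \<alpha> n)"
    unfolding msmul_cls_unitv_e0[OF v(2) m] msmul_cls_unitv_e0[OF v(3) kq_cycle_closed starts0_cycle]
      ladder_gen_eq
    using Q_add[OF u(1,2)] Q_add[OF F_add_closed[OF u(1,2)] u(3)] by simp
  also have "\<dots> = cls (\<lambda>_ _ _. 0)" by (rule cls_I[OF ladder_gen_in_I[OF a]])
  finally show ?thesis .
qed

lemma section_kills_ladder_gen:
  assumes s: "rmod_hom (KQ k) M F0mod s" and a: "is_lim \<alpha>"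
  defines "\<sigma> \<equiv> \<lambda>\<xi> n. s (cls (unitv \<xi> n kq_e0))"
  shows "\<sigma> (\<zeta> \<alpha> n) 0 \<alpha> m q + kq_mult k (\<sigma> \<alpha> n \<alpha> m) (\<lambda>p. - kq_e0 p) q
    + kq_mult k (\<sigma> \<alpha> (Suc n) \<alpha> m) (kq_cycle k) q = 0"
proof -
  let ?m = "\<lambda>p. - kq_e0 p :: 'k"
  have g: "cls (unitv \<xi> n' kq_e0) \<in> mcarrier M" if "F_index \<xi> n'" for \<xi> n'
    using cls_unitv_in_M[OF that] .
  have v: "F_index (\<zeta> \<alpha> n) 0" "F_index \<alpha> n" "F_index \<alpha> (Suc n)" using a by (auto simp: F_index_def)
  note sub = is_submoduleD[OF is_submodule_image_cls[OF F0_is_submodule], folded M_carrier]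
  have m: "?m \<in> kq_carrier k" by (rule kq_neg_closed[OF kq_e0_closed])
  have B: "msmul Q (cls (unitv \<alpha> n kq_e0)) ?m \<in> mcarrier M"
    and C: "msmul Q (cls (unitv \<alpha> (Suc n) kq_e0)) (kq_cycle k) \<in> mcarrier M"
    using sub(4) g v m by auto
  have AB: "madd Q (cls (unitv (\<zeta> \<alpha> n) 0 kq_e0)) (msmul Q (cls (unitv \<alpha> n kq_e0)) ?m) \<in> mcarrier M"
    using sub(3)[OF g[OF v(1)] B] .
  have s0: "s (cls (\<lambda>_ _ _. 0)) = (\<lambda>_ _ _. 0)"
    using rmod_hom_zero[OF s right_module_F0] M_zero Q_add[OF F_zero_closed F_zero_closed]
    by (simp add: M_ops Q_zero)
  have "madd (Fmod k) (madd (Fmod k) (\<sigma> (\<zeta> \<alpha> n) 0) (msmul (Fmod k) (\<sigma> \<alpha> n) ?m))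
      (msmul (Fmod k) (\<sigma> \<alpha> (Suc n)) (kq_cycle k)) = (\<lambda>_ _ _. 0)"
    using s AB B C g v m arg_cong[OF ladder_relation_in_M[OF a, of n], of s]
    unfolding rmod_hom_def submod_simps M_ops KQ_simps \<sigma>_def s0 by simp
  from fun_cong[OF fun_cong[OF fun_cong[OF this, of \<alpha>], of m], of q] show ?thesis by simp
qed

text \<open>If the section's lifts of the successor generators \<open>e\<^sup>\<zeta>\<^sub>0\<close> have no \<open>\<alpha>\<close>-coordinates,
  the relations say \<open>\<sigma>\<^sub>\<alpha>\<^sub>,\<^sub>n e\<^sub>0 = \<sigma>\<^sub>\<alpha>\<^sub>,\<^sub>n\<^sub>+\<^sub>1 c\<close> in coordinate \<open>\<alpha>\<close>, so \<open>\<sigma>\<^sub>\<alpha>\<^sub>,\<^sub>0 e\<^sub>0\<close> is divisible by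
  every power of \<open>c\<close> and vanishes there.\<close>
lemma cycle_functional_section_zero:
  assumes s: "rmod_hom (KQ k) M F0mod s" and a: "is_lim \<alpha>"
    and no_\<alpha>: "\<And>n m. s (cls (unitv (\<zeta> \<alpha> n) 0 kq_e0)) \<alpha> m = (\<lambda>_. 0)"
  shows "cycle_functional k \<alpha> (s (cls (unitv \<alpha> 0 kq_e0))) = 0"
proof -
  define \<sigma> where "\<sigma> n = s (cls (unitv \<alpha> n kq_e0))" for n
  have \<sigma>: "\<sigma> n \<alpha> m \<in> kq_carrier k" for n m
  proof -
    have "\<sigma> n \<in> F0 k"
      using s cls_unitv_in_M[of \<alpha> n] a unfolding rmod_hom_def submod_simps \<sigma>_def F_index_def by blast
    then show ?thesis by (rule F_carrierD(2)[OF F0_in_F])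
  qed
  have "kq_mult k (\<sigma> n \<alpha> m) kq_e0 = kq_mult k (kq_mult k (\<sigma> (Suc n) \<alpha> m) kq_e0) (kq_cycle k)" for n m
  proof -
    have "- kq_mult k (\<sigma> n \<alpha> m) kq_e0 q + kq_mult k (\<sigma> (Suc n) \<alpha> m) (kq_cycle k) q = 0" for q
      using section_kills_ladder_gen[OF s a, of n m q] no_\<alpha>[of n m]
      by (simp add: \<sigma>_def kq_mult_neg_right)
    then show ?thesis
      using kq_mult_assoc[OF \<sigma> kq_e0_closed kq_cycle_closed]
      by (simp add: fun_eq_iff kq_mult_e0_cycle eq_neg_iff_add_eq_0 algebra_simps)
  qed
  then have "kq_mult k (\<sigma> 0 \<alpha> m) kq_e0 = (\<lambda>_. 0)" for m by (rule kq_cycle_divisible_zero)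
  then have "kq_mult k (\<sigma> 0 \<alpha> m) kq_e0 (cycle_pow_path k m) = 0" for m by simp
  then have "\<sigma> 0 \<alpha> m (cycle_pow_path k m) = 0" for m
    by (simp add: kq_mult_e0_right ptgt_cycle_pow_path)
  then show ?thesis unfolding cycle_functional_def \<sigma>_def by simp
qed

theorem M_not_projective:
  assumes o: "omega1_type TYPE('w)" and \<zeta>: "ladder_system \<zeta>"
    and nonlim: "\<And>\<alpha> n. is_lim \<alpha> \<Longrightarrow> \<not> is_lim (\<zeta> \<alpha> n)"
  shows "\<not> projective TYPE(('w, 'k) Fel) (KQ k) M"
proof
  assume "projective TYPE(('w, 'k) Fel) (KQ k) M"
  then obtain s where s: "rmod_hom (KQ k) M F0mod s"
    and sec: "\<forall>m\<in>mcarrier M. cls (s m) = m"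
    using M_section_of_projective by blast
  have "s (cls (unitv \<gamma> 0 kq_e0)) \<in> F_carrier k" for \<gamma>
    using s cls_unitv_in_M[of \<gamma> 0] F0_in_F unfolding rmod_hom_def submod_simps F_index_def by blast
  then obtain \<alpha> where a: "is_lim \<alpha>"
    and outside: "\<forall>\<gamma><\<alpha>. \<forall>m. s (cls (unitv \<gamma> 0 kq_e0)) \<alpha> m = (\<lambda>_. 0)"
    using omega1_exists_limit_outside_supports[OF o, of "\<lambda>\<gamma>. s (cls (unitv \<gamma> 0 kq_e0))"] by blast
  have "\<zeta> \<alpha> n < \<alpha>" for n using \<zeta> a unfolding ladder_system_def by blast
  then have "cycle_functional k \<alpha> (s (cls (unitv \<alpha> 0 kq_e0))) = 0"
    using outside by (intro cycle_functional_section_zero[OF s a]) blast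
  moreover have "cls (unitv \<alpha> 0 kq_e0) = cls (s (cls (unitv \<alpha> 0 kq_e0)))"
    using sec cls_unitv_in_M[of \<alpha> 0] by (simp add: F_index_def)
  then obtain u where u: "u \<in> I"
    "s (cls (unitv \<alpha> 0 kq_e0)) = (\<lambda>\<xi> n p. unitv \<alpha> 0 kq_e0 \<xi> n p + u \<xi> n p)"
    using cls_eqD by blast
  moreover have "cycle_functional k \<alpha> (s (cls (unitv \<alpha> 0 kq_e0))) = 1"
    using cycle_functional_add[OF unitv_in_F[OF kq_e0_closed, of \<alpha> 0] subsetD[OF I_F u(1)]]
      cycle_functional_I[OF a nonlim u(1)]
    by (simp add: u(2) F_index_def cycle_functional_unitv_e0)
  ultimately show False by simp
qed

end

theorem theorem2p8:
  fixes k :: nat and \<zeta> :: "'w::wellorder \<Rightarrow> nat \<Rightarrow> 'w"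
  assumes "countable (UNIV :: 'k::field set)"
    and "\<forall>p :: 'k poly. degree p > 0 \<longrightarrow> (\<exists>x. poly p x = 0)"
    and "omega1_type TYPE('w)"
    and "good_ladder \<zeta>"
    and "UP TYPE('w)"
  shows "ext1_zero TYPE('e) (KQ k :: (path \<Rightarrow> 'k) ring) (M_omega1 k \<zeta>) (KQmod k)
         \<and> \<not> projective TYPE(('w, 'k) Fel) (KQ k :: (path \<Rightarrow> 'k) ring) (M_omega1 k \<zeta>)"
proof -
  interpret ladder_quotient k \<zeta> "I_sub k \<zeta> :: ('w, 'k) Fel set" by unfold_locales (rule refl)
  have \<zeta>: "ladder_system \<zeta>" using assms(4) unfolding good_ladder_def by blast
  have nonlim: "\<And>\<alpha> n. is_lim \<alpha> \<Longrightarrow> \<not> is_lim (\<zeta> \<alpha> n)"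
    using good_ladder_not_lim[OF assms(3,4)] .
  show ?thesis
    using ext1_zero_M[OF assms(5) \<zeta> nonlim countable_kq_carrier[OF assms(1)]]
      M_not_projective[OF assms(3) \<zeta> nonlim]
    by blast
qed

end
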